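(* Let $m\ge1$, $1\leq p<2$, $\nu\in\{0,1,2,\dots\}$, $0\le\alpha\le1$, with $\nu+\alpha>m(1/p-1/2)$, and let $f\in C^{\nu,\alpha}(\mathbb T^m)$. Then $$\|f\|_{A_p(\mathbb T^m)}\leq c\,\|f\|_{C^{\nu,\alpha}(\mathbb T^m)}^{\tau}\,\|f\|_{L^2(\mathbb T^m)}^{1-\tau},\qquad \tau=\frac{m(1/p-1/2)}{\nu+\alpha},$$ where $c>0$ does not depend on $f$.
   Context: $\mathbb T^m=\mathbb R^m/2\pi\mathbb Z^m$. $\widehat f(k)=(2\pi)^{-m}\int_{\mathbb T^m}f(t)e^{-i(k,t)}dt$, $\|f\|_{A_p(\mathbb T^m)}=\big(\sum_{k\in\mathbb Z^m}|\widehat f(k)|^p\big)^{1/p}$. $\|f\|_{L^2(\mathbb T^m)}=\big((2\pi)^{-m}\int_{\mathbb T^m}|f|^2\big)^{1/2}$, $\|g\|_{C(\mathbb T^m)}=\sup|g|$. For $0<\alpha\le1$, $C^{\nu,\alpha}(\mathbb T^m)$ is the class of $\nu$ times differentiable functions whose partial derivatives of order $\nu$ satisfy a Lipschitz condition of order $\alpha$; $C^{\nu,0}=C^\nu$. With $D_\gamma f=\partial^{|\gamma|}f/\partial t_1^{\gamma_1}\cdots\partial t_m^{\gamma_m}$ and $\omega(g,\delta)=\sup_{|t_1-t_2|\le\delta}|g(t_1)-g(t_2)|$, the norm is $\|f\|_{C^{\nu,\alpha}(\mathbb T^m)}=\max_{0\le|\gamma|\le\nu}\|D_\gamma f\|_{C(\mathbb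 T^m)}+\max_{|\gamma|=\nu}\sup_{\delta>0}\delta^{-\alpha}\omega(D_\gamma f,\delta)$. *)

theory Defs
  imports "HOL-Analysis.Analysis"
begin

text \<open>Functions on the torus T^m are represented as functions on R^m (index type 'm)
  that are 2 pi-periodic in every coordinate.\<close>

definition torus_periodic :: "(real^'m \<Rightarrow> 'b) \<Rightarrow> bool" where
  "torus_periodic f \<longleftrightarrow> (\<forall>i t. f (t + (2*pi) *\<^sub>R axis i 1) = f t)"

definition torus_box :: "(real^'m) set" where
  "torus_box = cbox 0 (\<chi> i. 2*pi)"

definition fourier_coeff :: "(real^'m::finite \<Rightarrow> complex) \<Rightarrow> int^'m \<Rightarrow> complex" where
  "fourier_coeff f k = complex_of_real ((2*pi) powi (- int CARD('m))) *
     integral torus_box (\<lambda>t. f t * cis (- (\<Sum>i\<in>UNIV. of_int (k$i) * t$i)))"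

text \<open>A_p norm as an (extended) sum; we express finiteness separately via summable_on.\<close>
definition Ap_norm :: "real \<Rightarrow> (real^'m::finite \<Rightarrow> complex) \<Rightarrow> real" where
  "Ap_norm p f = (\<Sum>\<^sub>\<infinity>k\<in>UNIV. norm (fourier_coeff f k) powr p) powr (1/p)"

definition L2_torus_norm :: "(real^'m::finite \<Rightarrow> complex) \<Rightarrow> real" where
  "L2_torus_norm f = sqrt ((2*pi) powi (- int CARD('m)) *
     integral torus_box (\<lambda>t. (norm (f t))\<^sup>2))"

definition sup_norm :: "('a \<Rightarrow> complex) \<Rightarrow> real" where
  "sup_norm g = (SUP t. norm (g t))"

definition partial :: "'m \<Rightarrow> (real^'m \<Rightarrow> complex) \<Rightarrow> real^'m \<Rightarrow> complex" where
  "partial i g t = vector_derivative (\<lambda>s. g (t + s *\<^sub>R axis i 1)) (at 0)"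

text \<open>Iterated partial derivative along a list of directions; a multi-index gamma
  corresponds to any list in which i occurs gamma_i times.\<close>
fun Dpart :: "'m list \<Rightarrow> (real^'m \<Rightarrow> complex) \<Rightarrow> real^'m \<Rightarrow> complex" where
  "Dpart [] g = g"
| "Dpart (i # xs) g = partial i (Dpart xs g)"

definition modulus_cont :: "(real^'m \<Rightarrow> complex) \<Rightarrow> real \<Rightarrow> real" where
  "modulus_cont g \<delta> = (SUP (t1, t2)\<in>{(t1, t2). dist t1 t2 \<le> \<delta>}. norm (g t1 - g t2))"

text \<open>C^{nu,alpha}(T^m): periodic, all partial derivatives of order \<le> nu exist and are
  continuous, and those of order nu are Hoelder of order alpha (for alpha = 0 this
  condition is automatic, giving C^nu).\<close>
definition C_nu_alpha :: "nat \<Rightarrow> real \<Rightarrow> (real^'m::finite \<Rightarrow> complex) set" where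
  "C_nu_alpha \<nu> \<alpha> = {f. torus_periodic f \<and>
     (\<forall>xs::'m list. length xs < \<nu> \<longrightarrow>
        (\<forall>i t. (\<lambda>s. Dpart xs f (t + s *\<^sub>R axis i 1)) differentiable (at 0))) \<and>
     (\<forall>xs::'m list. length xs \<le> \<nu> \<longrightarrow> continuous_on UNIV (Dpart xs f)) \<and>
     (\<forall>xs::'m list. length xs = \<nu> \<longrightarrow>
        (\<exists>L. \<forall>t1 t2. norm (Dpart xs f t1 - Dpart xs f t2) \<le> L * dist t1 t2 powr \<alpha>))}"

definition C_nu_alpha_norm :: "nat \<Rightarrow> real \<Rightarrow> (real^'m::finite \<Rightarrow> complex) \<Rightarrow> real" where
  "C_nu_alpha_norm \<nu> \<alpha> f =
     Max ((\<lambda>xs. sup_norm (Dpart xs f)) ` {xs::'m list. length xs \<le> \<nu>}) +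
     Max ((\<lambda>xs. SUP \<delta>\<in>{0<..}. \<delta> powr (-\<alpha>) * modulus_cont (Dpart xs f) \<delta>)
            ` {xs::'m list. length xs = \<nu>})"

end

theory Submission
  imports Defs
begin

(*
  Fix a coordinate direction i and the frequencies k with 2^j <= |k_i| < 2^(j+1). The
  (nu+1)-st forward difference of f with step s = pi / 2^(j+1) in direction i multiplies the
  Fourier coefficient at k by (e^(i k_i s) - 1)^(nu+1), of modulus at least 2^((nu+1)/2), while
  by the mean value theorem and the Hoelder condition on the nu-th derivatives the difference
  itself is bounded by H s^(nu+alpha), H the Hoelder part of the C^(nu,alpha) norm. Bessel's
  inequality therefore bounds the l^2 mass of the coefficients on the dyadic shell
  2^j <= |k|_inf < 2^(j+1) by H^2 2^(-2j(nu+alpha)), and Hoelder's inequality on the O(2^(jm))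
  frequencies of the shell turns this into
    sum |f^(k)|^p <~ H^p 2^(-jp(nu + alpha - m(1/p - 1/2))),
  a convergent geometric series. The frequencies in the cube |k|_inf < 2^J are estimated by
  Hoelder's and Bessel's inequalities through ||f||_2, and the choice
  2^J ~ (||f||_(C^(nu,alpha)) / ||f||_2)^(1/(nu+alpha)) balances the two contributions.
*)

subsection \<open>Periodic functions\<close>

lemma torus_periodic_minus:
  assumes "torus_periodic g"
  shows "g (t - (2*pi) *\<^sub>R axis i 1) = g t"
  using assms unfolding torus_periodic_def by (metis diff_add_cancel)

lemma torus_periodic_shift_nat:
  assumes "torus_periodic f"
  shows "f (t + (2*pi * real n) *\<^sub>R axis i 1) = f t"
proof (induction n arbitrary: t)
  case (Suc n)
  have "f (t + (2*pi * real (Suc n)) *\<^sub>R axis i 1) = f ((t + (2*pi * real n) *\<^sub>R axis i 1) + (2*pi) *\<^sub>R axis i 1)"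
    by (simp add: algebra_simps)
  also have "\<dots> = f (t + (2*pi * real n) *\<^sub>R axis i 1)"
    using assms unfolding torus_periodic_def by blast
  finally show ?case using Suc by simp
qed simp

lemma torus_periodic_shift_int:
  assumes p: "torus_periodic f"
  shows "f (t + (2*pi * real_of_int n) *\<^sub>R axis i 1) = f t"
proof (cases "n \<ge> 0")
  case True
  then show ?thesis using torus_periodic_shift_nat[OF p, of t "nat n" i] by simp
next
  case False
  then have n: "real_of_int n = - real (nat (- n))" by simp
  have "f ((t + (2*pi * real_of_int n) *\<^sub>R axis i 1) + (2*pi * real (nat (- n))) *\<^sub>R axis i 1)
      = f (t + (2*pi * real_of_int n) *\<^sub>R axis i 1)"
    by (rule torus_periodic_shift_nat[OF p])
  then show ?thesis unfolding n by (simp add: algebra_simps)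
qed

lemma torus_periodic_mult: "torus_periodic f \<Longrightarrow> torus_periodic g \<Longrightarrow> torus_periodic (\<lambda>t. f t * g t)"
  unfolding torus_periodic_def by simp

lemma torus_periodic_diff: "torus_periodic f \<Longrightarrow> torus_periodic g \<Longrightarrow> torus_periodic (\<lambda>t. f t - g t)"
  unfolding torus_periodic_def by simp

lemma torus_periodic_translate:
  assumes "torus_periodic f"
  shows "torus_periodic (\<lambda>t. f (t + h))"
  unfolding torus_periodic_def
proof (intro allI)
  fix i t
  have "f ((t + h) + (2 * pi) *\<^sub>R axis i 1) = f (t + h)"
    using assms unfolding torus_periodic_def by blast
  then show "f (t + (2 * pi) *\<^sub>R axis i 1 + h) = f (t + h)" by (simp add: ac_simps)
qed

lemma torus_periodic_value_in_box:
  assumes p: "torus_periodic f"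
  shows "\<exists>t'\<in>torus_box. f t' = f (t::real^'m::finite)"
proof -
  have "\<exists>t'. (\<forall>l\<in>L. 0 \<le> t'$l \<and> t'$l \<le> 2*pi) \<and> (\<forall>l. l \<notin> L \<longrightarrow> t'$l = t$l) \<and> f t' = f t"
    if "finite L" for L :: "'m set"
    using that
  proof (induction L rule: finite_induct)
    case empty then show ?case by (intro exI[of _ t]) auto
  next
    case (insert l L)
    then obtain t' where t': "\<forall>l\<in>L. 0 \<le> t'$l \<and> t'$l \<le> 2*pi" "\<forall>l. l \<notin> L \<longrightarrow> t'$l = t$l" "f t' = f t"
      by blast
    define n where "n = \<lfloor>t'$l / (2*pi)\<rfloor>"
    define t'' where "t'' = t' + (2*pi * real_of_int (- n)) *\<^sub>R axis l 1"
    have f: "f t'' = f t"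
      unfolding t''_def using torus_periodic_shift_int[OF p, of t' "- n" l] t'(3) by (simp only:)
    have "real_of_int n \<le> t'$l / (2*pi)" "t'$l / (2*pi) < real_of_int n + 1"
      unfolding n_def by linarith+
    then have "2*pi * real_of_int n \<le> t'$l" "t'$l < 2*pi * real_of_int n + 2*pi"
      using pi_gt_zero by (simp_all add: field_simps)
    then have c: "0 \<le> t''$l" "t''$l \<le> 2*pi" unfolding t''_def by (auto simp: axis_def)
    have o: "t''$l' = t'$l'" if "l' \<noteq> l" for l' unfolding t''_def using that by (auto simp: axis_def)
    show ?case
    proof (intro exI[of _ t''] conjI)
      show "\<forall>l'\<in>insert l L. 0 \<le> t''$l' \<and> t''$l' \<le> 2*pi" using c o t'(1) by (metis insert_iff)
      show "\<forall>l'. l' \<notin> insert l L \<longrightarrow> t''$l' = t$l'" using o t'(2) by auto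
    qed (rule f)
  qed
  from this[of UNIV] obtain t' where "\<forall>l. 0 \<le> t'$l \<and> t'$l \<le> 2*pi" "f t' = f t" by auto
  then show ?thesis unfolding torus_box_def by (intro bexI[of _ t']) (auto simp: mem_box_cart)
qed

lemma torus_periodic_norm_le_sup_norm:
  fixes f :: "real^'m::finite \<Rightarrow> complex"
  assumes c: "continuous_on UNIV f" and p: "torus_periodic f"
  shows "cmod (f t) \<le> sup_norm f"
proof -
  have "compact (f ` torus_box)" unfolding torus_box_def
    by (intro compact_continuous_image continuous_on_subset[OF c]) auto
  then obtain M where M: "\<forall>x\<in>f ` torus_box. norm x \<le> M" using compact_imp_bounded bounded_iff by metis
  have "cmod (f t) \<le> M" for t using torus_periodic_value_in_box[OF p, of t] M by force
  then have "bdd_above (range (\<lambda>t. cmod (f t)))" by (intro bdd_aboveI2) auto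
  then show ?thesis unfolding sup_norm_def by (rule cSUP_upper[rotated]) auto
qed

subsection \<open>Integrals over the torus\<close>

lemma integrable_on_torus_box:
  "continuous_on UNIV g \<Longrightarrow> (g :: real^'m::finite \<Rightarrow> 'b::banach) integrable_on torus_box"
  unfolding torus_box_def by (rule integrable_continuous, rule continuous_on_subset[of UNIV]) auto

lemma content_torus_box: "Henstock_Kurzweil_Integration.content (torus_box :: (real^'m::finite) set) = (2*pi) ^ CARD('m)"
proof -
  have "(0::real^'m) \<in> torus_box" unfolding torus_box_def by (simp add: mem_box_cart)
  then have "torus_box \<noteq> ({} :: (real^'m) set)" by blast
  then show ?thesis unfolding torus_box_def by (simp add: content_cbox_cart)
qed

lemma torus_normalization: "(2*pi) powi (- int CARD('m::finite)) = 1 / (2*pi) ^ CARD('m)"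
  by (simp add: power_int_minus power_int_of_nat divide_inverse)

lemma torus_box_Int_halfspace_le:
  assumes "0 \<le> a" "a \<le> 2*pi"
  shows "torus_box \<inter> {x::real^'m::finite. x \<bullet> axis i 1 \<le> a} = cbox 0 ((\<chi> l. 2*pi) - (2*pi - a) *\<^sub>R axis i 1)"
proof (rule set_eqI)
  fix x :: "real^'m"
  have "x \<in> cbox 0 ((\<chi> l. 2*pi) - (2*pi - a) *\<^sub>R axis i 1) \<longleftrightarrow>
      (\<forall>l. 0 \<le> x$l \<and> x$l \<le> (if l = i then a else 2*pi))"
    unfolding mem_box_cart by (simp add: axis_def if_distrib cong: if_cong)
  also have "\<dots> \<longleftrightarrow> (\<forall>l. 0 \<le> x$l \<and> x$l \<le> 2*pi) \<and> x$i \<le> a"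
    using assms by (auto 0 3 intro: order.trans dest: spec[of _ i])
  also have "\<dots> \<longleftrightarrow> x \<in> torus_box \<inter> {x. x \<bullet> axis i 1 \<le> a}"
    by (auto simp: torus_box_def mem_box_cart inner_axis)
  finally show "x \<in> torus_box \<inter> {x. x \<bullet> axis i 1 \<le> a} \<longleftrightarrow> x \<in> cbox 0 ((\<chi> l. 2*pi) - (2*pi - a) *\<^sub>R axis i 1)"
    by blast
qed

lemma torus_box_Int_halfspace_ge:
  assumes "0 \<le> a" "a \<le> 2*pi"
  shows "torus_box \<inter> {x::real^'m::finite. x \<bullet> axis i 1 \<ge> a} = cbox (a *\<^sub>R axis i 1) (\<chi> l. 2*pi)"
proof (rule set_eqI)
  fix x :: "real^'m"
  have "x \<in> cbox (a *\<^sub>R axis i 1) (\<chi> l. 2*pi) \<longleftrightarrow> (\<forall>l. (if l = i then a else 0) \<le> x$l \<and> x$l \<le> 2*pi)"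
    unfolding mem_box_cart by (simp add: axis_def if_distrib cong: if_cong)
  also have "\<dots> \<longleftrightarrow> (\<forall>l. 0 \<le> x$l \<and> x$l \<le> 2*pi) \<and> a \<le> x$i"
    using assms by (auto 0 3 intro: order.trans dest: spec[of _ i])
  also have "\<dots> \<longleftrightarrow> x \<in> torus_box \<inter> {x. x \<bullet> axis i 1 \<ge> a}"
    by (auto simp: torus_box_def mem_box_cart inner_axis)
  finally show "x \<in> torus_box \<inter> {x. x \<bullet> axis i 1 \<ge> a} \<longleftrightarrow> x \<in> cbox (a *\<^sub>R axis i 1) (\<chi> l. 2*pi)"
    by blast
qed

lemma integral_cbox_translate:
  fixes g :: "real^'m::finite \<Rightarrow> complex"
  assumes "continuous_on UNIV g"
  shows "integral (cbox (A - c) (B - c)) (\<lambda>x. g (x + c)) = integral (cbox A B) g"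
proof -
  have "(g has_integral integral (cbox A B) g) (cbox A B)"
    using assms by (intro integrable_integral integrable_continuous) (auto intro: continuous_on_subset)
  from has_integral_affinity'[OF this, of 1 c] show ?thesis
    by (auto intro: integral_unique)
qed

text \<open>Translation by \<open>s e\<^sub>i\<close> cuts the box at \<open>x\<^sub>i = 2\<pi> - s\<close>; periodicity moves the upper slab back
  below \<open>x\<^sub>i = s\<close>.\<close>

lemma integral_torus_box_translate:
  fixes g :: "real^'m::finite \<Rightarrow> complex"
  assumes cg: "continuous_on UNIV g" and pg: "torus_periodic g" and s: "0 \<le> s" "s \<le> 2*pi"
  shows "integral torus_box (\<lambda>t. g (t + s *\<^sub>R axis i 1)) = integral torus_box g"
proof -
  define e :: "real^'m" where "e = axis i 1"
  define c :: "real^'m" where "c = (\<chi> l. 2*pi)"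
  have eB: "e \<in> Basis" unfolding e_def by simp
  have "continuous_on UNIV (\<lambda>t. g (t + s *\<^sub>R e))"
    by (intro continuous_on_compose2[OF cg]) (auto intro!: continuous_intros)
  then have intG: "(\<lambda>t. g (t + s *\<^sub>R e)) integrable_on cbox 0 c"
    using integrable_on_torus_box unfolding torus_box_def c_def by blast
  have intg: "g integrable_on cbox 0 c"
    using integrable_on_torus_box[OF cg] unfolding torus_box_def c_def .
  have "integral torus_box (\<lambda>t. g (t + s *\<^sub>R e)) =
     integral (torus_box \<inter> {x. x \<bullet> e \<le> 2*pi - s}) (\<lambda>t. g (t + s *\<^sub>R e)) +
     integral (torus_box \<inter> {x. x \<bullet> e \<ge> 2*pi - s}) (\<lambda>t. g (t + s *\<^sub>R e))"
    using integral_split[OF intG eB] unfolding torus_box_def c_def by blast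
  also have "integral (torus_box \<inter> {x. x \<bullet> e \<le> 2*pi - s}) (\<lambda>t. g (t + s *\<^sub>R e))
      = integral (cbox (s *\<^sub>R e - s *\<^sub>R e) (c - s *\<^sub>R e)) (\<lambda>t. g (t + s *\<^sub>R e))"
    using torus_box_Int_halfspace_le[of "2*pi - s" i] s unfolding e_def c_def by simp
  also have "\<dots> = integral (cbox (s *\<^sub>R e) c) g" by (rule integral_cbox_translate[OF cg])
  also have "integral (torus_box \<inter> {x. x \<bullet> e \<ge> 2*pi - s}) (\<lambda>t. g (t + s *\<^sub>R e))
      = integral (cbox ((2*pi - s) *\<^sub>R e) c) (\<lambda>t. g (t + (s - 2*pi) *\<^sub>R e))"
  proof -
    have "g (t + s *\<^sub>R e) = g (t + (s - 2*pi) *\<^sub>R e)" for t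
      using torus_periodic_minus[OF pg, of "t + s *\<^sub>R e" i] unfolding e_def
      by (simp add: algebra_simps)
    then show ?thesis
      using torus_box_Int_halfspace_ge[of "2*pi - s" i] s unfolding e_def c_def by simp
  qed
  also have "\<dots> = integral (cbox (0 - (s - 2*pi) *\<^sub>R e) ((c - (2*pi - s) *\<^sub>R e) - (s - 2*pi) *\<^sub>R e))
      (\<lambda>t. g (t + (s - 2*pi) *\<^sub>R e))"
    by (simp add: algebra_simps)
  also have "\<dots> = integral (cbox 0 (c - (2*pi - s) *\<^sub>R e)) g" by (rule integral_cbox_translate[OF cg])
  finally have "integral torus_box (\<lambda>t. g (t + s *\<^sub>R e)) =
     integral (torus_box \<inter> {x. x \<bullet> e \<ge> s}) g + integral (torus_box \<inter> {x. x \<bullet> e \<le> s}) g"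
    using torus_box_Int_halfspace_le[of s i] torus_box_Int_halfspace_ge[of s i] s
    unfolding e_def c_def by simp
  also have "\<dots> = integral torus_box g"
    using integral_split[OF intg eB, of s] unfolding torus_box_def c_def by simp
  finally show ?thesis unfolding e_def .
qed

subsection \<open>Characters and Fourier coefficients\<close>

definition phase :: "int^'m::finite \<Rightarrow> real^'m \<Rightarrow> real" where
  "phase k t = (\<Sum>i\<in>UNIV. of_int (k$i) * t$i)"

lemma fourier_coeff_phase:
  "fourier_coeff f k = complex_of_real ((2*pi) powi (- int CARD('m))) *
     integral torus_box (\<lambda>t. f t * cis (- phase k t))" for f :: "real^'m::finite \<Rightarrow> complex"
  unfolding fourier_coeff_def phase_def ..

lemma phase_translate: "phase k (t + s *\<^sub>R axis i 1) = phase k t + of_int (k$i) * s"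
proof -
  have "phase k (t + s *\<^sub>R axis i 1) =
      (\<Sum>l\<in>UNIV. of_int (k$l) * t$l + (if l = i then of_int (k$i) * s else 0))"
    unfolding phase_def by (intro sum.cong) (auto simp: axis_def algebra_simps)
  then show ?thesis unfolding phase_def by (simp add: sum.distrib)
qed

lemma phase_diff: "phase (k - l) t = phase k t - phase l t"
  unfolding phase_def by (simp add: sum_subtractf algebra_simps)

lemma continuous_on_phase [continuous_intros]: "continuous_on S (phase k)"
  unfolding phase_def by (intro continuous_intros)

lemma torus_periodic_cis_phase:
  assumes "c \<in> \<int>"
  shows "torus_periodic (\<lambda>t. cis (c * phase k t))"
  unfolding torus_periodic_def
proof (intro allI)
  fix i t
  have "cis (c * phase k (t + (2 * pi) *\<^sub>R axis i 1)) = cis (c * phase k t) * cis (2*pi * (c * of_int (k$i)))"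
    unfolding phase_translate by (simp add: cis_mult distrib_left mult_ac)
  also have "cis (2*pi * (c * of_int (k$i))) = 1"
    using assms by (intro cis_multiple_2pi) auto
  finally show "cis (c * phase k (t + (2 * pi) *\<^sub>R axis i 1)) = cis (c * phase k t)" by simp
qed

lemma integral_mult_cis_phase:
  fixes g :: "real^'m::finite \<Rightarrow> complex"
  shows "integral torus_box (\<lambda>t. g t * cis (- phase k t)) = (2*pi) ^ CARD('m) * fourier_coeff g k"
  unfolding fourier_coeff_phase torus_normalization by simp

lemma fourier_coeff_translate:
  fixes g :: "real^'m::finite \<Rightarrow> complex"
  assumes cg: "continuous_on UNIV g" and pg: "torus_periodic g" and s: "0 \<le> s" "s \<le> 2*pi"
  shows "fourier_coeff (\<lambda>t. g (t + s *\<^sub>R axis i 1)) k = cis (of_int (k$i) * s) * fourier_coeff g k"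
proof -
  define G where "G t = g t * cis (-1 * phase k t)" for t
  have cG: "continuous_on UNIV G" unfolding G_def by (intro continuous_intros cg)
  have pG: "torus_periodic G"
    unfolding G_def by (intro torus_periodic_mult pg torus_periodic_cis_phase) simp
  have "cis (of_int (k$i) * s) * cis (-1 * (phase k t + of_int (k$i) * s)) = cis (- phase k t)" for t
    by (simp add: cis_mult)
  then have "g (t + s *\<^sub>R axis i 1) * cis (- phase k t) = cis (of_int (k$i) * s) * G (t + s *\<^sub>R axis i 1)" for t
    unfolding G_def phase_translate by (metis mult.left_commute)
  then have "integral torus_box (\<lambda>t. g (t + s *\<^sub>R axis i 1) * cis (- phase k t)) =
        cis (of_int (k$i) * s) * integral torus_box (\<lambda>t. G (t + s *\<^sub>R axis i 1))"
    by simp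
  also have "\<dots> = cis (of_int (k$i) * s) * integral torus_box G"
    using integral_torus_box_translate[OF cG pG s] by simp
  finally show ?thesis unfolding fourier_coeff_phase G_def by simp
qed

lemma fourier_coeff_diff:
  fixes u v :: "real^'m::finite \<Rightarrow> complex"
  assumes "continuous_on UNIV u" "continuous_on UNIV v"
  shows "fourier_coeff (\<lambda>t. u t - v t) k = fourier_coeff u k - fourier_coeff v k"
proof -
  have "integral torus_box (\<lambda>t. (u t - v t) * cis (- phase k t)) =
     integral torus_box (\<lambda>t. u t * cis (- phase k t)) - integral torus_box (\<lambda>t. v t * cis (- phase k t))"
    unfolding ring_distribs by (intro integral_diff integrable_on_torus_box continuous_intros assms)
  then show ?thesis unfolding fourier_coeff_phase by (simp add: ring_distribs)
qed

text \<open>Translating by half a period in a direction where \<open>d\<close> does not vanish flips the sign.\<close>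

lemma integral_cis_phase:
  "integral (torus_box :: (real^'m::finite) set) (\<lambda>t. cis (phase d t)) =
     (if d = 0 then (2*pi) ^ CARD('m) else 0)"
proof (cases "d = 0")
  case True
  then have "phase d = (\<lambda>t. 0)" unfolding phase_def by auto
  then show ?thesis using True content_torus_box[where 'm='m] unfolding torus_box_def
    by (simp add: scaleR_conv_of_real)
next
  case False
  then obtain i where di: "d$i \<noteq> 0" by (metis vec_eq_iff zero_index)
  define s where "s = pi / \<bar>of_int (d$i)\<bar>"
  have "\<bar>of_int (d$i)\<bar> \<ge> (1::real)" using di by linarith
  then have s: "0 \<le> s" "s \<le> 2*pi" unfolding s_def using pi_gt_zero by (auto simp: divide_le_eq)
  have flip: "cis (of_int (d$i) * s) = -1"
  proof (cases "d$i > 0")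
    case False
    then have "of_int (d$i) * s = - pi" unfolding s_def using di by simp
    then show ?thesis by (simp add: complex_eq_iff)
  qed (simp add: s_def)
  have "integral torus_box (\<lambda>t. cis (1 * phase d t)) =
      integral torus_box (\<lambda>t. cis (1 * phase d (t + s *\<^sub>R axis i 1)))"
    by (rule integral_torus_box_translate[OF _ torus_periodic_cis_phase[OF Ints_1] s, symmetric])
      (intro continuous_intros)
  also have "\<dots> = cis (of_int (d$i) * s) * integral torus_box (\<lambda>t. cis (phase d t))"
  proof -
    have "cis (1 * phase d (t + s *\<^sub>R axis i 1)) = cis (of_int (d$i) * s) * cis (phase d t)" for t
      unfolding phase_translate by (simp add: cis_mult add.commute)
    then show ?thesis by simp
  qed
  finally show ?thesis using False flip by simp
qed

subsection \<open>Bessel's inequality\<close>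

lemma integral_of_real:
  assumes "f integrable_on S"
  shows "integral S (\<lambda>x. complex_of_real (f x)) = complex_of_real (integral S f)"
  using has_integral_of_real[OF integrable_integral[OF assms]] by (rule integral_unique)

lemma mult_cnj_eq_norm_sq: "z * cnj z = (complex_of_real (cmod z))\<^sup>2"
  using complex_norm_square[of z] by simp

lemma integral_mult_cnj_trig_poly:
  fixes g :: "real^'m::finite \<Rightarrow> complex"
  assumes cg: "continuous_on UNIV g" and K: "finite K"
  shows "integral torus_box (\<lambda>t. g t * cnj (\<Sum>k\<in>K. c k * cis (phase k t))) =
     (2*pi) ^ CARD('m) * (\<Sum>k\<in>K. cnj (c k) * fourier_coeff g k)"
proof -
  have "integral torus_box (\<lambda>t. g t * cnj (\<Sum>k\<in>K. c k * cis (phase k t))) =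
      integral torus_box (\<lambda>t. \<Sum>k\<in>K. cnj (c k) * (g t * cis (- phase k t)))"
    by (simp add: cnj_sum sum_distrib_left cis_cnj ac_simps)
  also have "\<dots> = (\<Sum>k\<in>K. cnj (c k) * integral torus_box (\<lambda>t. g t * cis (- phase k t)))"
    using K by (subst integral_sum) (auto intro!: integrable_on_torus_box continuous_intros cg)
  finally show ?thesis unfolding integral_mult_cis_phase by (simp add: sum_distrib_left ac_simps)
qed

lemma integral_norm_sq_trig_poly:
  assumes K: "finite K"
  shows "integral (torus_box :: (real^'m::finite) set)
      (\<lambda>t. (\<Sum>k\<in>K. c k * cis (phase k t)) * cnj (\<Sum>k\<in>K. c k * cis (phase k t))) =
     (2*pi) ^ CARD('m) * (\<Sum>k\<in>K. (complex_of_real (cmod (c k)))\<^sup>2)"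
proof -
  have "(\<Sum>k\<in>K. c k * cis (phase k t)) * cnj (\<Sum>k\<in>K. c k * cis (phase k t)) =
      (\<Sum>k\<in>K. \<Sum>l\<in>K. (c k * cnj (c l)) * cis (phase (k - l) t))" for t :: "real^'m"
  proof -
    have "cis (phase k t) * cis (- phase l t) = cis (phase (k - l) t)" for k l
      by (simp add: cis_mult phase_diff)
    moreover have "(\<Sum>k\<in>K. c k * cis (phase k t)) * cnj (\<Sum>k\<in>K. c k * cis (phase k t)) =
        (\<Sum>k\<in>K. \<Sum>l\<in>K. (c k * cnj (c l)) * (cis (phase k t) * cis (- phase l t)))"
      by (simp add: cnj_sum cis_cnj sum_product ac_simps)
    ultimately show ?thesis by simp
  qed
  then have "integral torus_box
      (\<lambda>t. (\<Sum>k\<in>K. c k * cis (phase k t)) * cnj (\<Sum>k\<in>K. c k * cis (phase k t))) =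
     integral torus_box (\<lambda>t. \<Sum>k\<in>K. \<Sum>l\<in>K. (c k * cnj (c l)) * cis (phase (k - l) t))"
    by simp
  also have "\<dots> = (\<Sum>k\<in>K. \<Sum>l\<in>K. (c k * cnj (c l)) * integral (torus_box :: (real^'m) set) (\<lambda>t. cis (phase (k - l) t)))"
    using K by (subst integral_sum, auto intro!: integrable_on_torus_box continuous_intros integrable_sum)+
  also have "\<dots> = (\<Sum>k\<in>K. \<Sum>l\<in>K. if k = l then (c k * cnj (c l)) * (2*pi) ^ CARD('m) else 0)"
    unfolding integral_cis_phase by (intro sum.cong refl) auto
  finally show ?thesis using K by (simp add: mult_cnj_eq_norm_sq sum_distrib_left ac_simps)
qed

text \<open>The integral of \<open>|g - P|\<^sup>2\<close>, \<open>P\<close> the partial Fourier sum over \<open>K\<close>, equals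
  \<open>\<integral>|g|\<^sup>2 - (2\<pi>)^m \<Sum>\<^sub>K |g\<^sup>^(k)|\<^sup>2\<close>, and it is nonnegative.\<close>

lemma bessel_inequality:
  fixes g :: "real^'m::finite \<Rightarrow> complex"
  assumes cg: "continuous_on UNIV g" and K: "finite K"
  shows "(2*pi) ^ CARD('m) * (\<Sum>k\<in>K. (cmod (fourier_coeff g k))\<^sup>2) \<le> integral torus_box (\<lambda>t. (cmod (g t))\<^sup>2)"
proof -
  define W :: real where "W = (2*pi) ^ CARD('m)"
  define S where "S = (\<Sum>k\<in>K. (cmod (fourier_coeff g k))\<^sup>2)"
  define P where "P t = (\<Sum>k\<in>K. fourier_coeff g k * cis (phase k t))" for t
  have cP: "continuous_on UNIV P" unfolding P_def by (intro continuous_intros)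
  note ib = integrable_on_torus_box
  have norm_sq: "cnj (fourier_coeff g k) * fourier_coeff g k = complex_of_real ((cmod (fourier_coeff g k))\<^sup>2)" for k
    by (simp only: complex_norm_square mult.commute)
  have gP: "integral torus_box (\<lambda>t. g t * cnj (P t)) = of_real W * of_real S"
    unfolding P_def integral_mult_cnj_trig_poly[OF cg K] norm_sq W_def S_def by simp
  have Pg: "integral torus_box (\<lambda>t. P t * cnj (g t)) = of_real W * of_real S"
  proof -
    have "integral torus_box (\<lambda>t. P t * cnj (g t)) = cnj (integral torus_box (\<lambda>t. g t * cnj (P t)))"
      by (simp add: integral_cnj mult.commute)
    then show ?thesis using gP by simp
  qed
  have PP: "integral torus_box (\<lambda>t. P t * cnj (P t)) = of_real W * of_real S"
    unfolding P_def integral_norm_sq_trig_poly[OF K] W_def S_def by simp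
  have eq: "(\<lambda>t. complex_of_real ((cmod (g t - P t))\<^sup>2)) =
     (\<lambda>t. g t * cnj (g t) - g t * cnj (P t) - P t * cnj (g t) + P t * cnj (P t))"
    unfolding complex_norm_square by (simp add: algebra_simps)
  have ir1: "(\<lambda>t. (cmod (g t - P t))\<^sup>2) integrable_on torus_box" by (intro ib continuous_intros cg cP)
  have ir2: "(\<lambda>t. (cmod (g t))\<^sup>2) integrable_on torus_box" by (intro ib continuous_intros cg)
  have i1: "(\<lambda>t. g t * cnj (g t)) integrable_on torus_box" by (intro ib continuous_intros cg)
  have i2: "(\<lambda>t. g t * cnj (P t)) integrable_on torus_box" by (intro ib continuous_intros cg cP)
  have i3: "(\<lambda>t. P t * cnj (g t)) integrable_on torus_box" by (intro ib continuous_intros cg cP)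
  have i4: "(\<lambda>t. P t * cnj (P t)) integrable_on torus_box" by (intro ib continuous_intros cP)
  have "complex_of_real (integral torus_box (\<lambda>t. (cmod (g t - P t))\<^sup>2)) =
     integral torus_box (\<lambda>t. g t * cnj (g t) - g t * cnj (P t) - P t * cnj (g t) + P t * cnj (P t))"
    by (simp only: integral_of_real[OF ir1, symmetric] eq)
  also have "\<dots> = integral torus_box (\<lambda>t. g t * cnj (g t)) - integral torus_box (\<lambda>t. g t * cnj (P t))
      - integral torus_box (\<lambda>t. P t * cnj (g t)) + integral torus_box (\<lambda>t. P t * cnj (P t))"
    by (simp only: integral_add integral_diff integrable_diff i1 i2 i3 i4)
  also have "integral torus_box (\<lambda>t. g t * cnj (g t)) = complex_of_real (integral torus_box (\<lambda>t. (cmod (g t))\<^sup>2))"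
    by (simp only: integral_of_real[OF ir2] complex_norm_square[symmetric])
  finally have "complex_of_real (integral torus_box (\<lambda>t. (cmod (g t - P t))\<^sup>2)) =
      complex_of_real (integral torus_box (\<lambda>t. (cmod (g t))\<^sup>2) - W * S)"
    unfolding gP Pg PP by simp
  then have "integral torus_box (\<lambda>t. (cmod (g t - P t))\<^sup>2) = integral torus_box (\<lambda>t. (cmod (g t))\<^sup>2) - W * S"
    by (simp only: of_real_eq_iff)
  moreover have "0 \<le> integral torus_box (\<lambda>t. (cmod (g t - P t))\<^sup>2)"
    by (intro integral_nonneg ib continuous_intros cg cP) auto
  ultimately show ?thesis unfolding W_def S_def by simp
qed

lemma L2_torus_norm_sq:
  fixes g :: "real^'m::finite \<Rightarrow> complex"
  assumes "continuous_on UNIV g"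
  shows "(L2_torus_norm g)\<^sup>2 = integral torus_box (\<lambda>t. (cmod (g t))\<^sup>2) / (2*pi) ^ CARD('m)"
proof -
  have "0 \<le> integral torus_box (\<lambda>t. (cmod (g t))\<^sup>2)"
    by (intro integral_nonneg integrable_on_torus_box continuous_intros assms) auto
  then show ?thesis unfolding L2_torus_norm_def torus_normalization by simp
qed

lemma L2_torus_norm_nonneg:
  fixes g :: "real^'m::finite \<Rightarrow> complex"
  assumes "continuous_on UNIV g"
  shows "0 \<le> L2_torus_norm g"
proof -
  have "0 \<le> integral torus_box (\<lambda>t. (cmod (g t))\<^sup>2)"
    by (intro integral_nonneg integrable_on_torus_box continuous_intros assms) auto
  then show ?thesis unfolding L2_torus_norm_def torus_normalization by simp
qed

lemma sum_fourier_coeff_sq_le_L2: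
  fixes g :: "real^'m::finite \<Rightarrow> complex"
  assumes cg: "continuous_on UNIV g" and K: "finite K"
  shows "(\<Sum>k\<in>K. (cmod (fourier_coeff g k))\<^sup>2) \<le> (L2_torus_norm g)\<^sup>2"
  using bessel_inequality[OF cg K] unfolding L2_torus_norm_sq[OF cg]
  by (simp add: field_simps)

lemma L2_torus_norm_le:
  fixes g :: "real^'m::finite \<Rightarrow> complex"
  assumes cg: "continuous_on UNIV g" and M: "\<And>t. cmod (g t) \<le> M"
  shows "L2_torus_norm g \<le> M"
proof -
  have "integral torus_box (\<lambda>t. (cmod (g t))\<^sup>2) \<le> integral (torus_box :: (real^'m) set) (\<lambda>t. M\<^sup>2)"
    using M by (intro integral_le integrable_on_torus_box continuous_intros cg power_mono) auto
  also have "\<dots> = (2*pi) ^ CARD('m) * M\<^sup>2"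
    using content_torus_box[where 'm='m] unfolding torus_box_def by simp
  finally have "(L2_torus_norm g)\<^sup>2 \<le> M\<^sup>2"
    unfolding L2_torus_norm_sq[OF cg] by (simp add: divide_le_eq mult.commute)
  then show ?thesis using M[of 0] by (meson norm_ge_zero order_trans power2_le_imp_le)
qed

lemma fourier_coeff_eq_0_if_L2_torus_norm_eq_0:
  fixes g :: "real^'m::finite \<Rightarrow> complex"
  assumes "continuous_on UNIV g" "L2_torus_norm g = 0"
  shows "fourier_coeff g k = 0"
  using sum_fourier_coeff_sq_le_L2[OF assms(1), of "{k}"] assms(2) by simp


subsection \<open>Forward differences\<close>

fun forward_diff :: "'a::plus \<Rightarrow> nat \<Rightarrow> ('a \<Rightarrow> 'b::minus) \<Rightarrow> 'a \<Rightarrow> 'b" where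
  "forward_diff h 0 g = g"
| "forward_diff h (Suc n) g = forward_diff h n (\<lambda>t. g (t + h) - g t)"

lemma forward_diff_Suc':
  "forward_diff h (Suc n) g t = forward_diff h n g (t + h) - forward_diff h n g t"
proof (induction n arbitrary: g t)
  case (Suc n)
  have "forward_diff h (Suc (Suc n)) g t = forward_diff h (Suc n) (\<lambda>y. g (y + h) - g y) t" by simp
  also have "\<dots> = forward_diff h n (\<lambda>y. g (y + h) - g y) (t + h) - forward_diff h n (\<lambda>y. g (y + h) - g y) t"
    by (rule Suc.IH)
  finally show ?case by simp
qed simp

lemma Re_forward_diff: "Re (forward_diff h n g t) = forward_diff h n (\<lambda>x. Re (g x)) t"
  by (induction n arbitrary: g) auto

lemma Im_forward_diff: "Im (forward_diff h n g t) = forward_diff h n (\<lambda>x. Im (g x)) t"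
  by (induction n arbitrary: g) auto

lemma forward_diff_along_line:
  fixes g :: "'a::real_vector \<Rightarrow> 'b::ab_group_add"
  shows "forward_diff (s *\<^sub>R v) n g t = forward_diff s n (\<lambda>x. g (t + x *\<^sub>R v)) 0"
proof (induction n arbitrary: g)
  case (Suc n)
  have "(\<lambda>x. g (t + x *\<^sub>R v + s *\<^sub>R v) - g (t + x *\<^sub>R v)) =
        (\<lambda>y. g (t + (y + s) *\<^sub>R v) - g (t + y *\<^sub>R v))"
    by (simp add: scaleR_add_left add.assoc)
  then show ?case using Suc.IH by simp
qed simp

lemma continuous_on_forward_diff:
  fixes g :: "'a::real_normed_vector \<Rightarrow> 'b::real_normed_vector"
  shows "continuous_on UNIV g \<Longrightarrow> continuous_on UNIV (forward_diff h n g)"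
proof (induction n arbitrary: g)
  case (Suc n)
  have "continuous_on UNIV (\<lambda>t. g (t + h) - g t)"
    by (intro continuous_intros continuous_on_compose2[OF Suc.prems]) auto
  then show ?case using Suc.IH by simp
qed simp

lemma fourier_coeff_forward_diff:
  fixes g :: "real^'m::finite \<Rightarrow> complex"
  assumes "continuous_on UNIV g" "torus_periodic g" "0 \<le> s" "s \<le> 2*pi"
  shows "fourier_coeff (forward_diff (s *\<^sub>R axis i 1) n g) k = (cis (of_int (k$i) * s) - 1) ^ n * fourier_coeff g k"
  using assms(1,2)
proof (induction n arbitrary: g)
  case (Suc n)
  have c: "continuous_on UNIV (\<lambda>t. g (t + s *\<^sub>R axis i 1))"
    by (intro continuous_on_compose2[OF Suc.prems(1)] continuous_intros) auto
  have "continuous_on UNIV (\<lambda>t. g (t + s *\<^sub>R axis i 1) - g t)"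
    by (intro continuous_intros c Suc.prems)
  moreover have "torus_periodic (\<lambda>t. g (t + s *\<^sub>R axis i 1) - g t)"
    by (intro torus_periodic_diff torus_periodic_translate Suc.prems)
  ultimately have "fourier_coeff (forward_diff (s *\<^sub>R axis i 1) (Suc n) g) k =
      (cis (of_int (k$i) * s) - 1) ^ n * fourier_coeff (\<lambda>t. g (t + s *\<^sub>R axis i 1) - g t) k"
    using Suc.IH by simp
  also have "fourier_coeff (\<lambda>t. g (t + s *\<^sub>R axis i 1) - g t) k = (cis (of_int (k$i) * s) - 1) * fourier_coeff g k"
    unfolding fourier_coeff_diff[OF c Suc.prems(1)] fourier_coeff_translate[OF Suc.prems assms(3,4)]
    by (simp add: algebra_simps)
  finally show ?case by (simp add: ac_simps)
qed simp

lemma forward_diff_mean_value: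
  fixes u :: "nat \<Rightarrow> real \<Rightarrow> real"
  assumes "\<And>k y. k < n \<Longrightarrow> (u k has_real_derivative u (Suc k) y) (at y)" and "s > 0"
  shows "\<exists>\<xi>. x \<le> \<xi> \<and> \<xi> \<le> x + real n * s \<and> forward_diff s n (u 0) x = s ^ n * u n \<xi>"
  using assms(1)
proof (induction n arbitrary: u x)
  case 0 then show ?case by auto
next
  case (Suc n)
  define v where "v k y = u k (y + s) - u k y" for k y
  have dv: "(v k has_real_derivative v (Suc k) y) (at y)" if "k < n" for k y
  proof -
    have "(u k has_real_derivative u (Suc k) (y + s)) (at (y + s))" using Suc.prems that by simp
    then have "((\<lambda>y. u k (y + s)) has_real_derivative u (Suc k) (y + s)) (at y)"
      by (simp add: DERIV_shift)
    then show ?thesis unfolding v_def using Suc.prems that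
      by (intro derivative_intros) auto
  qed
  obtain \<xi> where xi: "x \<le> \<xi>" "\<xi> \<le> x + real n * s" "forward_diff s n (v 0) x = s ^ n * v n \<xi>"
    using Suc.IH[where u=v and x=x] dv by blast
  obtain z where z: "\<xi> < z" "z < \<xi> + s" "u n (\<xi> + s) - u n \<xi> = (\<xi> + s - \<xi>) * u (Suc n) z"
    using MVT2[of \<xi> "\<xi> + s" "u n" "u (Suc n)"] Suc.prems \<open>s > 0\<close> by auto
  have "forward_diff s (Suc n) (u 0) x = forward_diff s n (v 0) x" unfolding v_def by simp
  also have "\<dots> = s ^ Suc n * u (Suc n) z" using xi(3) z(3) unfolding v_def by simp
  finally show ?case using xi z by (intro exI[of _ z]) (auto simp: algebra_simps)
qed

text \<open>Write the \<open>(n+1)\<close>-st difference as the difference of two \<open>n\<close>-th ones and apply the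
  mean value form to each: the \<open>n\<close>-th derivative is then evaluated at two points at
  distance at most \<open>(n+1) s\<close>.\<close>

lemma forward_diff_Suc_le_holder:
  fixes u :: "nat \<Rightarrow> real \<Rightarrow> real"
  assumes deriv: "\<And>k y. k < n \<Longrightarrow> (u k has_real_derivative u (Suc k) y) (at y)"
    and holder: "\<And>x y. \<bar>u n x - u n y\<bar> \<le> H * \<bar>x - y\<bar> powr \<alpha>"
    and s: "s > 0" and "0 \<le> \<alpha>" "0 \<le> H"
  shows "\<bar>forward_diff s (Suc n) (u 0) 0\<bar> \<le> s ^ n * (H * (real (Suc n) * s) powr \<alpha>)"
proof -
  obtain x1 where x1: "s \<le> x1" "x1 \<le> s + real n * s" "forward_diff s n (u 0) s = s ^ n * u n x1"
    using forward_diff_mean_value[of n u s s] deriv s by blast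
  obtain x2 where x2: "0 \<le> x2" "x2 \<le> 0 + real n * s" "forward_diff s n (u 0) 0 = s ^ n * u n x2"
    using forward_diff_mean_value[of n u s 0] deriv s by blast
  have "\<bar>x1 - x2\<bar> \<le> real (Suc n) * s" using x1 x2 s by (auto simp: algebra_simps)
  then have "\<bar>u n x1 - u n x2\<bar> \<le> H * (real (Suc n) * s) powr \<alpha>"
    using holder[of x1 x2] assms by (meson mult_left_mono order_trans powr_mono2 abs_ge_zero)
  moreover have "forward_diff s (Suc n) (u 0) 0 = s ^ n * (u n x1 - u n x2)"
    using forward_diff_Suc'[of s n "u 0" 0] x1(3) x2(3) by (simp add: right_diff_distrib)
  then have "\<bar>forward_diff s (Suc n) (u 0) 0\<bar> = s ^ n * \<bar>u n x1 - u n x2\<bar>"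
    using s by (simp add: abs_mult)
  ultimately show ?thesis using s by (simp add: mult_left_mono)
qed

subsection \<open>Differences of functions in \<open>C^(\<nu>,\<alpha>)\<close>\<close>

lemma C_nu_alpha_continuous: "f \<in> C_nu_alpha \<nu> \<alpha> \<Longrightarrow> continuous_on UNIV f"
  unfolding C_nu_alpha_def by (force dest: spec[of _ "[]"])

lemma C_nu_alpha_periodic: "f \<in> C_nu_alpha \<nu> \<alpha> \<Longrightarrow> torus_periodic f"
  unfolding C_nu_alpha_def by blast

lemma C_nu_alpha_has_vector_derivative_along_axis:
  fixes f :: "real^'m::finite \<Rightarrow> complex"
  assumes f: "f \<in> C_nu_alpha \<nu> \<alpha>" and k: "k < \<nu>"
  shows "((\<lambda>x. Dpart (replicate k i) f (t + x *\<^sub>R axis i 1)) has_vector_derivative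
           Dpart (replicate (Suc k) i) f (t + y *\<^sub>R axis i 1)) (at y)"
proof -
  define t' where "t' = t + y *\<^sub>R axis i 1"
  have "(\<lambda>\<sigma>. Dpart (replicate k i) f (t' + \<sigma> *\<^sub>R axis i 1)) differentiable (at 0)"
    using f k unfolding C_nu_alpha_def by auto
  from vector_derivative_works[THEN iffD1, OF this]
  have dg: "((\<lambda>\<sigma>. Dpart (replicate k i) f (t' + \<sigma> *\<^sub>R axis i 1)) has_vector_derivative
      Dpart (replicate (Suc k) i) f t') (at (y - y))"
    by (simp add: partial_def)
  have d1: "((\<lambda>x. x - y) has_vector_derivative 1) (at y)"
    by (auto intro!: derivative_eq_intros)
  have "(((\<lambda>\<sigma>. Dpart (replicate k i) f (t' + \<sigma> *\<^sub>R axis i 1)) \<circ> (\<lambda>x. x - y)) has_vector_derivative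
      1 *\<^sub>R Dpart (replicate (Suc k) i) f t') (at y)"
    by (rule vector_diff_chain_at[OF d1 dg])
  then show ?thesis unfolding t'_def comp_def by (simp add: algebra_simps)
qed

lemma C_nu_alpha_forward_diff_bound:
  fixes f :: "real^'m::finite \<Rightarrow> complex"
  assumes f: "f \<in> C_nu_alpha \<nu> \<alpha>" and "0 \<le> \<alpha>" "s > 0" "0 \<le> H"
    and holder: "\<And>t1 t2. cmod (Dpart (replicate \<nu> i) f t1 - Dpart (replicate \<nu> i) f t2) \<le> H * dist t1 t2 powr \<alpha>"
  shows "cmod (forward_diff (s *\<^sub>R axis i 1) (Suc \<nu>) f t) \<le> 2 * (s ^ \<nu> * (H * (real (Suc \<nu>) * s) powr \<alpha>))"
proof -
  define u where "u k x = Dpart (replicate k i) f (t + x *\<^sub>R axis i 1)" for k x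
  have deriv: "(u k has_vector_derivative u (Suc k) y) (at y)" if "k < \<nu>" for k y
    unfolding u_def by (rule C_nu_alpha_has_vector_derivative_along_axis[OF f that])
  have line: "cmod (u \<nu> x - u \<nu> y) \<le> H * \<bar>x - y\<bar> powr \<alpha>" for x y
    using holder[of "t + x *\<^sub>R axis i 1" "t + y *\<^sub>R axis i 1"]
    unfolding u_def dist_norm by (simp add: scaleR_diff_left[symmetric])
  have "\<bar>Re (u \<nu> x) - Re (u \<nu> y)\<bar> \<le> H * \<bar>x - y\<bar> powr \<alpha>" for x y
    using line[of x y] abs_Re_le_cmod[of "u \<nu> x - u \<nu> y"] by simp
  then have "\<bar>Re (forward_diff s (Suc \<nu>) (u 0) 0)\<bar> \<le> s ^ \<nu> * (H * (real (Suc \<nu>) * s) powr \<alpha>)"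
    unfolding Re_forward_diff
    by (intro forward_diff_Suc_le_holder[where u="\<lambda>k x. Re (u k x)"] has_field_derivative_Re deriv assms)
  moreover have "\<bar>Im (u \<nu> x) - Im (u \<nu> y)\<bar> \<le> H * \<bar>x - y\<bar> powr \<alpha>" for x y
    using line[of x y] abs_Im_le_cmod[of "u \<nu> x - u \<nu> y"] by simp
  then have "\<bar>Im (forward_diff s (Suc \<nu>) (u 0) 0)\<bar> \<le> s ^ \<nu> * (H * (real (Suc \<nu>) * s) powr \<alpha>)"
    unfolding Im_forward_diff
    by (intro forward_diff_Suc_le_holder[where u="\<lambda>k x. Im (u k x)"] has_field_derivative_Im deriv assms)
  ultimately show ?thesis
    using cmod_le[of "forward_diff s (Suc \<nu>) (u 0) 0"] unfolding forward_diff_along_line u_def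
    by simp
qed

lemma norm_cis_minus_one_sq: "(cmod (cis \<theta> - 1))\<^sup>2 = 2 - 2 * cos \<theta>"
proof -
  have "(cmod (cis \<theta> - 1))\<^sup>2 = (cos \<theta> - 1)\<^sup>2 + (sin \<theta>)\<^sup>2" by (simp add: cmod_power2)
  also have "\<dots> = 2 - 2 * cos \<theta>" using sin_cos_squared_add[of \<theta>] by (simp add: power2_eq_square algebra_simps)
  finally show ?thesis .
qed

lemma two_le_norm_cis_minus_one_sq:
  assumes "pi / 2 \<le> \<bar>\<theta>\<bar>" "\<bar>\<theta>\<bar> \<le> pi"
  shows "2 \<le> (cmod (cis \<theta> - 1))\<^sup>2"
proof -
  have "cos \<bar>\<theta>\<bar> \<le> cos (pi / 2)" using assms by (intro cos_monotone_0_pi_le) auto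
  then show ?thesis unfolding norm_cis_minus_one_sq by simp
qed

text \<open>With step \<open>s = \<pi>/2^(j+1)\<close> the multiplier \<open>(e^(i k\<^sub>i s) - 1)^(\<nu>+1)\<close> of the difference
  has modulus at least \<open>2^((\<nu>+1)/2)\<close> on these frequencies.\<close>

lemma sum_fourier_coeff_sq_coordinate_shell:
  fixes f :: "real^'m::finite \<Rightarrow> complex"
  assumes f: "f \<in> C_nu_alpha \<nu> \<alpha>" and a: "0 \<le> \<alpha>" and H0: "0 \<le> H"
    and H: "\<And>t1 t2. cmod (Dpart (replicate \<nu> i) f t1 - Dpart (replicate \<nu> i) f t2) \<le> H * dist t1 t2 powr \<alpha>"
    and K: "finite K" and Ks: "\<And>k. k \<in> K \<Longrightarrow> 2^j \<le> \<bar>k$i\<bar> \<and> \<bar>k$i\<bar> < 2^(Suc j)"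
  shows "2^(Suc \<nu>) * (\<Sum>k\<in>K. (cmod (fourier_coeff f k))\<^sup>2)
     \<le> (2 * ((pi / 2^(Suc j)) ^ \<nu> * (H * (real (Suc \<nu>) * (pi / 2^(Suc j))) powr \<alpha>)))\<^sup>2"
proof -
  define s where "s = pi / 2^(Suc j)"
  have s0: "s > 0" unfolding s_def by simp
  have "(1::real) \<le> 2^(Suc j)" by (rule one_le_power) simp
  then have "pi / 2^(Suc j) \<le> pi / 1" by (intro divide_left_mono) auto
  then have s1: "s \<le> 2 * pi" unfolding s_def using pi_gt_zero by linarith
  have cf: "continuous_on UNIV f" by (rule C_nu_alpha_continuous[OF f])
  have pf: "torus_periodic f" by (rule C_nu_alpha_periodic[OF f])
  define g where "g = forward_diff (s *\<^sub>R axis i 1) (Suc \<nu>) f"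
  define M where "M = 2 * (s ^ \<nu> * (H * (real (Suc \<nu>) * s) powr \<alpha>))"
  have cg: "continuous_on UNIV g" unfolding g_def by (rule continuous_on_forward_diff[OF cf])
  have "L2_torus_norm g \<le> M"
    unfolding g_def M_def by (intro L2_torus_norm_le cg[unfolded g_def] C_nu_alpha_forward_diff_bound f a s0 H0 H)
  then have S: "(\<Sum>k\<in>K. (cmod (fourier_coeff g k))\<^sup>2) \<le> M\<^sup>2"
    using sum_fourier_coeff_sq_le_L2[OF cg K] L2_torus_norm_nonneg[OF cg]
    by (meson order_trans power_mono)
  have each: "2^(Suc \<nu>) * (cmod (fourier_coeff f k))\<^sup>2 \<le> (cmod (fourier_coeff g k))\<^sup>2" if k: "k \<in> K" for k
  proof -
    define \<theta> where "\<theta> = of_int (k$i) * s"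
    have "2^j \<le> \<bar>real_of_int (k$i)\<bar>" "\<bar>real_of_int (k$i)\<bar> < 2^(Suc j)"
      using Ks[OF k] by (metis of_int_abs of_int_le_iff of_int_less_iff of_int_numeral of_int_power)+
    then have "2^j * s \<le> \<bar>\<theta>\<bar>" "\<bar>\<theta>\<bar> \<le> 2^(Suc j) * s"
      unfolding \<theta>_def using s0 by (auto simp: abs_mult intro: mult_right_mono)
    then have "2 \<le> (cmod (cis \<theta> - 1))\<^sup>2"
      by (intro two_le_norm_cis_minus_one_sq) (simp_all add: s_def field_simps)
    then have "2^(Suc \<nu>) \<le> ((cmod (cis \<theta> - 1))\<^sup>2) ^ Suc \<nu>" by (intro power_mono) auto
    moreover have "fourier_coeff g k = (cis \<theta> - 1) ^ Suc \<nu> * fourier_coeff f k"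
      unfolding g_def \<theta>_def by (rule fourier_coeff_forward_diff[OF cf pf less_imp_le[OF s0] s1])
    then have "(cmod (fourier_coeff g k))\<^sup>2 = ((cmod (cis \<theta> - 1))\<^sup>2) ^ Suc \<nu> * (cmod (fourier_coeff f k))\<^sup>2"
      by (simp add: norm_mult norm_power power_mult_distrib power_mult[symmetric] mult.commute)
    ultimately show ?thesis by (simp add: mult_right_mono)
  qed
  have "2^(Suc \<nu>) * (\<Sum>k\<in>K. (cmod (fourier_coeff f k))\<^sup>2) \<le> (\<Sum>k\<in>K. (cmod (fourier_coeff g k))\<^sup>2)"
    unfolding sum_distrib_left by (intro sum_mono each)
  also have "\<dots> \<le> M\<^sup>2" by (rule S)
  finally show ?thesis unfolding M_def s_def .
qed

subsection \<open>The Hoelder part of the norm\<close>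

definition holder_seminorm :: "real \<Rightarrow> (real^'m::finite \<Rightarrow> complex) \<Rightarrow> real" where
  "holder_seminorm \<alpha> g = (SUP \<delta>\<in>{0<..}. \<delta> powr (-\<alpha>) * modulus_cont g \<delta>)"

lemma holder_le_at_scale:
  fixes g :: "'a::metric_space \<Rightarrow> complex"
  assumes L: "\<And>t1 t2. cmod (g t1 - g t2) \<le> L * dist t1 t2 powr \<alpha>"
    and "0 \<le> \<alpha>" "0 \<le> L" "dist t1 t2 \<le> \<delta>"
  shows "cmod (g t1 - g t2) \<le> L * \<delta> powr \<alpha>"
proof -
  have "L * dist t1 t2 powr \<alpha> \<le> L * \<delta> powr \<alpha>" using assms by (intro mult_left_mono powr_mono2) auto
  then show ?thesis using L[of t1 t2] by linarith
qed

lemma modulus_cont_le_holder: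
  fixes g :: "real^'m::finite \<Rightarrow> complex"
  assumes L: "\<And>t1 t2. cmod (g t1 - g t2) \<le> L * dist t1 t2 powr \<alpha>" and "0 \<le> \<alpha>" "0 \<le> L" "0 \<le> \<delta>"
  shows "modulus_cont g \<delta> \<le> L * \<delta> powr \<alpha>"
  unfolding modulus_cont_def
proof (rule cSUP_least)
  have "(0, 0) \<in> {(t1 :: real^'m, t2 :: real^'m). dist t1 t2 \<le> \<delta>}" using assms by simp
  then show "{(t1 :: real^'m, t2 :: real^'m). dist t1 t2 \<le> \<delta>} \<noteq> {}" by blast
qed (use holder_le_at_scale[OF L assms(2,3)] in auto)

lemma norm_diff_le_modulus_cont:
  fixes g :: "real^'m::finite \<Rightarrow> complex"
  assumes L: "\<And>t1 t2. cmod (g t1 - g t2) \<le> L * dist t1 t2 powr \<alpha>" and "0 \<le> \<alpha>" "0 \<le> L"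
  shows "cmod (g t1 - g t2) \<le> modulus_cont g (dist t1 t2)"
  unfolding modulus_cont_def
proof (rule cSUP_upper2)
  show "bdd_above ((\<lambda>(s1, s2). cmod (g s1 - g s2)) ` {(s1, s2). dist s1 s2 \<le> dist t1 t2})"
    using holder_le_at_scale[OF L assms(2,3)] by (intro bdd_aboveI[of _ "L * dist t1 t2 powr \<alpha>"]) auto
qed auto

lemma holder_const_nonneg:
  fixes g :: "real^'m::finite \<Rightarrow> complex"
  assumes L: "\<And>t1 t2. cmod (g t1 - g t2) \<le> L * dist t1 t2 powr \<alpha>"
  shows "0 \<le> L"
proof -
  have "dist 0 (axis i 1 :: real^'m) = 1" by (simp add: dist_norm)
  then have "cmod (g 0 - g (axis i 1)) \<le> L" using L[of 0 "axis i 1"] by simp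
  then show ?thesis by (rule order_trans[OF norm_ge_zero])
qed

lemma holder_seminorm_bound:
  fixes g :: "real^'m::finite \<Rightarrow> complex"
  assumes L: "\<And>t1 t2. cmod (g t1 - g t2) \<le> L * dist t1 t2 powr \<alpha>" and a: "0 \<le> \<alpha>"
  shows "cmod (g t1 - g t2) \<le> holder_seminorm \<alpha> g * dist t1 t2 powr \<alpha>" "0 \<le> holder_seminorm \<alpha> g"
proof -
  have L0: "0 \<le> L" by (rule holder_const_nonneg[OF L])
  have bdd: "bdd_above ((\<lambda>\<delta>. \<delta> powr (-\<alpha>) * modulus_cont g \<delta>) ` {0<..})"
  proof (rule bdd_aboveI2)
    fix \<delta> :: real assume "\<delta> \<in> {0<..}"
    then have "\<delta> powr (-\<alpha>) * modulus_cont g \<delta> \<le> \<delta> powr (-\<alpha>) * (L * \<delta> powr \<alpha>)"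
      using modulus_cont_le_holder[OF L a L0] by (intro mult_left_mono) auto
    also have "\<dots> = L" using \<open>\<delta> \<in> {0<..}\<close> by (simp add: powr_minus field_simps)
    finally show "\<delta> powr (-\<alpha>) * modulus_cont g \<delta> \<le> L" .
  qed
  have upper: "\<delta> powr (-\<alpha>) * modulus_cont g \<delta> \<le> holder_seminorm \<alpha> g" if "\<delta> > 0" for \<delta>
    unfolding holder_seminorm_def using that by (intro cSUP_upper[OF _ bdd]) auto
  have mc: "cmod (g t1 - g t2) \<le> modulus_cont g (dist t1 t2)" for t1 t2
    by (rule norm_diff_le_modulus_cont[OF L a L0])
  have "dist 0 (axis i 1 :: real^'m) = 1" by (simp add: dist_norm)
  then have "0 \<le> modulus_cont g 1" using order_trans[OF norm_ge_zero mc[of 0 "axis i 1"]] by simp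
  then show "0 \<le> holder_seminorm \<alpha> g" using upper[of 1] by simp
  show "cmod (g t1 - g t2) \<le> holder_seminorm \<alpha> g * dist t1 t2 powr \<alpha>"
  proof (cases "t1 = t2")
    case False
    define d where "d = dist t1 t2"
    have d: "d > 0" unfolding d_def using False by simp
    have "cmod (g t1 - g t2) \<le> d powr \<alpha> * (d powr (-\<alpha>) * modulus_cont g d)"
      using mc[of t1 t2] d unfolding d_def by (simp add: powr_minus field_simps)
    also have "\<dots> \<le> d powr \<alpha> * holder_seminorm \<alpha> g" using upper[OF d] by (intro mult_left_mono) auto
    finally show ?thesis unfolding d_def by (simp add: mult.commute)
  qed simp
qed

lemma finite_lists_length_le_UNIV: "finite {xs :: 'm::finite list. length xs \<le> n}"
  using finite_lists_length_le[of "UNIV :: 'm set" n] by simp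

definition holder_part :: "nat \<Rightarrow> real \<Rightarrow> (real^'m::finite \<Rightarrow> complex) \<Rightarrow> real" where
  "holder_part \<nu> \<alpha> f = Max ((\<lambda>xs. holder_seminorm \<alpha> (Dpart xs f)) ` {xs::'m list. length xs = \<nu>})"

lemma C_nu_alpha_holder_part:
  fixes f :: "real^'m::finite \<Rightarrow> complex"
  assumes f: "f \<in> C_nu_alpha \<nu> \<alpha>" and a: "0 \<le> \<alpha>"
  shows "cmod (Dpart (replicate \<nu> i) f t1 - Dpart (replicate \<nu> i) f t2) \<le> holder_part \<nu> \<alpha> f * dist t1 t2 powr \<alpha>"
    and "0 \<le> holder_part \<nu> \<alpha> f"
proof -
  have fin: "finite {xs :: 'm list. length xs = \<nu>}"
    by (rule finite_subset[OF _ finite_lists_length_le_UNIV[of \<nu>]]) auto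
  have "\<forall>xs::'m list. length xs = \<nu> \<longrightarrow>
      (\<exists>L. \<forall>t1 t2. norm (Dpart xs f t1 - Dpart xs f t2) \<le> L * dist t1 t2 powr \<alpha>)"
    using f unfolding C_nu_alpha_def by blast
  then obtain L where "\<forall>t1 t2. cmod (Dpart (replicate \<nu> i) f t1 - Dpart (replicate \<nu> i) f t2) \<le> L * dist t1 t2 powr \<alpha>"
    by (auto dest: spec[of _ "replicate \<nu> i"])
  note hs = holder_seminorm_bound[OF this[rule_format] a]
  have "holder_seminorm \<alpha> (Dpart (replicate \<nu> i) f) \<le> holder_part \<nu> \<alpha> f"
    unfolding holder_part_def by (rule Max_ge) (use fin in auto)
  moreover from this have "holder_seminorm \<alpha> (Dpart (replicate \<nu> i) f) * dist t1 t2 powr \<alpha>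
      \<le> holder_part \<nu> \<alpha> f * dist t1 t2 powr \<alpha>"
    by (rule mult_right_mono) simp
  ultimately show "cmod (Dpart (replicate \<nu> i) f t1 - Dpart (replicate \<nu> i) f t2) \<le> holder_part \<nu> \<alpha> f * dist t1 t2 powr \<alpha>"
    "0 \<le> holder_part \<nu> \<alpha> f"
    using hs(1)[of t1 t2] hs(2) by linarith+
qed

lemma C_nu_alpha_norm_ge:
  fixes f :: "real^'m::finite \<Rightarrow> complex"
  assumes f: "f \<in> C_nu_alpha \<nu> \<alpha>" and a: "0 \<le> \<alpha>"
  shows "holder_part \<nu> \<alpha> f \<le> C_nu_alpha_norm \<nu> \<alpha> f" and "L2_torus_norm f \<le> C_nu_alpha_norm \<nu> \<alpha> f"
proof -
  have cf: "continuous_on UNIV f" by (rule C_nu_alpha_continuous[OF f])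
  have sup: "cmod (f t) \<le> sup_norm f" for t
    by (rule torus_periodic_norm_le_sup_norm[OF cf C_nu_alpha_periodic[OF f]])
  have "sup_norm f \<le> Max ((\<lambda>xs. sup_norm (Dpart xs f)) ` {xs::'m list. length xs \<le> \<nu>})"
    by (rule Max_ge) (auto intro: finite_lists_length_le_UNIV image_eqI[of _ _ "[]"])
  then have nrm: "sup_norm f + holder_part \<nu> \<alpha> f \<le> C_nu_alpha_norm \<nu> \<alpha> f"
    unfolding C_nu_alpha_norm_def holder_part_def holder_seminorm_def by simp
  have "0 \<le> sup_norm f" using sup[of 0] norm_ge_zero[of "f 0"] by linarith
  then show "holder_part \<nu> \<alpha> f \<le> C_nu_alpha_norm \<nu> \<alpha> f" using nrm by linarith
  show "L2_torus_norm f \<le> C_nu_alpha_norm \<nu> \<alpha> f"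
    using nrm L2_torus_norm_le[OF cf sup] C_nu_alpha_holder_part(2)[OF f a] by linarith
qed

subsection \<open>Dyadic cubes and shells of frequencies\<close>

definition dyadic_cube :: "nat \<Rightarrow> (int^'m::finite) set" where
  "dyadic_cube n = {k. \<forall>l. \<bar>k$l\<bar> < 2^n}"

definition dyadic_shell :: "nat \<Rightarrow> (int^'m::finite) set" where
  "dyadic_shell j = {k. (\<forall>l. \<bar>k$l\<bar> < 2^(Suc j)) \<and> (\<exists>i. 2^j \<le> \<bar>k$i\<bar>)}"

lemma dyadic_shell_subset_cube: "dyadic_shell j \<subseteq> dyadic_cube (Suc j)"
  unfolding dyadic_shell_def dyadic_cube_def by auto

lemma dyadic_cube_mono: "n \<le> N \<Longrightarrow> dyadic_cube n \<subseteq> dyadic_cube N"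
  unfolding dyadic_cube_def by (auto intro: less_le_trans[OF _ power_increasing[of n N "2::int"]])

lemma finite_card_dyadic_cube:
  "finite (dyadic_cube n :: (int^'m::finite) set) \<and> card (dyadic_cube n :: (int^'m) set) \<le> (2 * 2^n) ^ CARD('m)"
proof -
  define B where "B = Pi\<^sub>E (UNIV::'m set) (\<lambda>_. {-(2^n)<..<(2::int)^n})"
  have inj: "inj_on vec_nth (dyadic_cube n :: (int^'m) set)" by (auto simp: inj_on_def vec_eq_iff)
  have sub: "vec_nth ` (dyadic_cube n :: (int^'m) set) \<subseteq> B"
    unfolding B_def dyadic_cube_def by (auto simp: abs_less_iff) (metis minus_less_iff)
  have fB: "finite B" unfolding B_def by (intro finite_PiE) auto
  have "card (dyadic_cube n :: (int^'m) set) \<le> card B" by (rule card_inj_on_le[OF inj sub fB])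
  also have "card B = (nat (2 * 2^n - 1)) ^ CARD('m)" unfolding B_def by (simp add: card_PiE algebra_simps)
  also have "\<dots> \<le> (2 * 2^n) ^ CARD('m)" by (intro power_mono) (auto simp: nat_le_iff)
  finally show ?thesis using inj_on_finite[OF inj sub fB] by simp
qed

lemma real_card_subset_dyadic_cube:
  assumes "A \<subseteq> (dyadic_cube n :: (int^'m::finite) set)"
  shows "real (card A) \<le> (2 * 2^n) ^ CARD('m)"
proof -
  have "card A \<le> (2 * 2^n) ^ CARD('m)"
    using assms finite_card_dyadic_cube[of n, where 'm='m] card_mono order_trans by metis
  then have "real (card A) \<le> real ((2 * 2^n) ^ CARD('m))" by (simp only: of_nat_le_iff)
  then show ?thesis by simp
qed

lemma finite_subset_dyadic_cube: "finite K \<Longrightarrow> \<exists>N. K \<subseteq> (dyadic_cube N :: (int^'m::finite) set) \<and> J < N"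
proof (induction K rule: finite_induct)
  case (insert k K)
  then obtain N where N: "K \<subseteq> dyadic_cube N" "J < N" by blast
  define n where "n = nat (\<Sum>l\<in>UNIV. \<bar>k$l\<bar>)"
  have "\<bar>k$l\<bar> < 2^n" for l
  proof -
    have "\<bar>k$l\<bar> \<le> (\<Sum>l\<in>UNIV. \<bar>k$l\<bar>)" by (rule member_le_sum) auto
    also have "\<dots> = int n" unfolding n_def by (simp add: sum_nonneg)
    also have "\<dots> < 2^n" by (metis of_nat_less_iff less_exp of_nat_numeral of_nat_power)
    finally show ?thesis .
  qed
  then have "k \<in> dyadic_cube n" unfolding dyadic_cube_def by blast
  then show ?case using N dyadic_cube_mono[of N "max N n"] dyadic_cube_mono[of n "max N n"]
    by (intro exI[of _ "max N n"]) auto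
qed auto

lemma dyadic_shells_cover:
  assumes kN: "k \<in> dyadic_cube N" and kJ: "k \<notin> dyadic_cube J"
  shows "\<exists>j\<in>{J..<N}. k \<in> dyadic_shell j"
proof -
  have JN: "J < N"
  proof (rule ccontr)
    assume "\<not> J < N"
    then have "dyadic_cube N \<subseteq> dyadic_cube J" by (intro dyadic_cube_mono) simp
    then show False using kN kJ by blast
  qed
  define j where "j = (LEAST j. k \<in> dyadic_cube (Suc j))"
  have ex: "k \<in> dyadic_cube (Suc (N - 1))" using kN JN by simp
  have j1: "k \<in> dyadic_cube (Suc j)" unfolding j_def by (rule LeastI[where P="\<lambda>j. k \<in> dyadic_cube (Suc j)", OF ex])
  have j2: "j \<le> N - 1" unfolding j_def by (rule Least_le[where P="\<lambda>j. k \<in> dyadic_cube (Suc j)", OF ex])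
  have Jj: "J \<le> j"
  proof (rule ccontr)
    assume "\<not> J \<le> j"
    then have "dyadic_cube (Suc j) \<subseteq> dyadic_cube J" by (intro dyadic_cube_mono) simp
    then show False using j1 kJ by blast
  qed
  have "\<exists>i. 2^j \<le> \<bar>k$i\<bar>"
  proof (cases j)
    case 0
    obtain i where "2^J \<le> \<bar>k$i\<bar>" using kJ unfolding dyadic_cube_def by (auto simp: not_less)
    moreover have "(1::int) \<le> 2^J" by simp
    ultimately have "1 \<le> \<bar>k$i\<bar>" by linarith
    then show ?thesis using 0 by (intro exI[of _ i]) simp
  next
    case (Suc j')
    have "k \<notin> dyadic_cube (Suc j')" unfolding j_def using Suc by (metis j_def lessI not_less_Least)
    then show ?thesis unfolding dyadic_cube_def using Suc by (auto simp: not_less)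
  qed
  then have "k \<in> dyadic_shell j" using j1 unfolding dyadic_shell_def dyadic_cube_def by blast
  moreover have "j \<in> {J..<N}" using Jj j2 JN by auto
  ultimately show ?thesis by blast
qed

lemma sum_le_sum_cover:
  fixes a :: "'a \<Rightarrow> real"
  assumes K: "finite K" and I: "finite I" and cov: "\<And>x. x \<in> K \<Longrightarrow> \<exists>i\<in>I. x \<in> P i"
    and nn: "\<And>x. x \<in> K \<Longrightarrow> 0 \<le> a x"
  shows "(\<Sum>x\<in>K. a x) \<le> (\<Sum>i\<in>I. \<Sum>x\<in>K \<inter> P i. a x)"
proof -
  have "(\<Sum>x\<in>K. a x) \<le> (\<Sum>x\<in>K. \<Sum>i\<in>I. if x \<in> P i then a x else 0)"
  proof (rule sum_mono)
    fix x assume x: "x \<in> K"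
    then obtain i where i: "i \<in> I" "x \<in> P i" using cov by blast
    then have "a x = (if x \<in> P i then a x else 0)" by simp
    also have "\<dots> \<le> (\<Sum>i\<in>I. if x \<in> P i then a x else 0)"
      by (rule member_le_sum[OF i(1)]) (use nn x I in auto)
    finally show "a x \<le> (\<Sum>i\<in>I. if x \<in> P i then a x else 0)" .
  qed
  also have "\<dots> = (\<Sum>i\<in>I. \<Sum>x\<in>K. if x \<in> P i then a x else 0)" by (rule sum.swap)
  also have "\<dots> = (\<Sum>i\<in>I. \<Sum>x\<in>K \<inter> P i. a x)"
  proof (rule sum.cong[OF refl])
    fix i
    have "K \<inter> P i = {x\<in>K. x \<in> P i}" by auto
    then show "(\<Sum>x\<in>K. if x \<in> P i then a x else 0) = (\<Sum>x\<in>K \<inter> P i. a x)"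
      using sum.inter_filter[OF K, of a "\<lambda>x. x \<in> P i"] by simp
  qed
  finally show ?thesis .
qed

text \<open>Hoelder's inequality with exponents \<open>2/p\<close> and \<open>2/(2-p)\<close>, via convexity of \<open>x^(2/p)\<close>.\<close>

lemma sum_powr_le_card_powr_sum_sq:
  fixes a :: "'a \<Rightarrow> real"
  assumes A: "finite A" and nn: "\<And>x. x \<in> A \<Longrightarrow> 0 \<le> a x" and p: "1 \<le> p" "p \<le> 2"
  shows "(\<Sum>x\<in>A. a x powr p) \<le> real (card A) powr (1 - p/2) * (\<Sum>x\<in>A. (a x)\<^sup>2) powr (p/2)"
proof -
  define A' where "A' = {x\<in>A. a x > 0}"
  have fA': "finite A'" unfolding A'_def using A by simp
  have pos: "\<And>x. x \<in> A' \<Longrightarrow> 0 < a x" unfolding A'_def by simp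
  have e1: "(\<Sum>x\<in>A. a x powr p) = (\<Sum>x\<in>A'. a x powr p)"
    unfolding A'_def using A nn by (intro sum.mono_neutral_right) (auto, smt (verit))
  have e2: "(\<Sum>x\<in>A. (a x)\<^sup>2) = (\<Sum>x\<in>A'. (a x)\<^sup>2)"
    unfolding A'_def using A nn by (intro sum.mono_neutral_right) (auto, smt (verit))
  show ?thesis
  proof (cases "A' = {}")
    case True
    then show ?thesis unfolding e1 by simp
  next
    case False
    define n where "n = real (card A')"
    have n: "n > 0" unfolding n_def using fA' False by (simp add: card_gt_0_iff)
    define Y where "Y = (\<Sum>x\<in>A'. a x powr p)"
    define Q where "Q = (\<Sum>x\<in>A'. (a x)\<^sup>2)"
    have pp: "\<And>x. x \<in> A' \<Longrightarrow> a x powr p > 0" using pos by (metis less_irrefl powr_gt_zero)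
    have qq: "\<And>x. x \<in> A' \<Longrightarrow> (a x)\<^sup>2 > 0" using pos by (metis less_irrefl zero_less_power2)
    have Y0: "Y > 0" unfolding Y_def using fA' False pp by (intro sum_pos) auto
    have Q0: "Q > 0" unfolding Q_def using fA' False qq by (intro sum_pos) auto
    have cv: "convex_on {0<..} (\<lambda>x. x powr (2/p))" using p by (intro powr_convex) (simp add: field_simps)
    have "(\<Sum>x\<in>A'. (1/n) *\<^sub>R (a x powr p)) powr (2/p) \<le> (\<Sum>x\<in>A'. (1/n) * ((a x powr p) powr (2/p)))"
      using n pp by (intro convex_on_sum[OF fA' False cv]) (auto simp: n_def)
    also have "\<dots> = Q / n" unfolding Q_def
      using pos p by (simp add: powr_powr sum_distrib_left powr_realpow[symmetric] sum_divide_distrib)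
    finally have "(Y / n) powr (2/p) \<le> Q / n" unfolding Y_def by (simp add: sum_divide_distrib)
    then have "((Y / n) powr (2/p)) powr (p/2) \<le> (Q / n) powr (p/2)"
      using p Y0 n by (intro powr_mono2) auto
    then have "Y \<le> n * (Q / n) powr (p/2)" using p Y0 n by (simp add: powr_powr field_simps)
    also have "\<dots> = n powr (1 - p/2) * Q powr (p/2)"
      using n Q0 by (simp add: powr_divide powr_diff)
    also have "\<dots> \<le> real (card A) powr (1 - p/2) * Q powr (p/2)"
      unfolding n_def A'_def using A p n
      by (intro mult_right_mono powr_mono2) (auto simp: n_def A'_def intro: card_mono)
    finally show ?thesis unfolding e1 e2 Y_def Q_def .
  qed
qed

lemma sum_power_le_geometric_tail:
  fixes r :: real
  assumes r: "0 < r" "r < 1"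
  shows "(\<Sum>j\<in>{J..<N}. r ^ j) \<le> r ^ J / (1 - r)"
proof -
  have "(\<Sum>j\<in>{J..<N}. r ^ j) = r ^ J * (\<Sum>i<N - J. r ^ i)"
    by (simp add: sum.atLeastLessThan_shift_0[of _ J N] power_add sum_distrib_left atLeast0LessThan)
  also have "(\<Sum>i<N - J. r ^ i) \<le> 1 / (1 - r)"
    using geometric_sum_less[OF r] by (intro less_imp_le) (auto simp: lessThan_atLeast0)
  finally show ?thesis using r by (simp add: mult_left_mono divide_inverse)
qed

lemma powr_sq:
  assumes "0 \<le> (x::real)"
  shows "(x\<^sup>2) powr (p/2) = x powr p"
proof (cases "x = 0")
  case False
  then have "x\<^sup>2 = x powr 2" using assms by (simp add: powr_numeral)
  then show ?thesis by (simp add: powr_powr)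
qed simp

lemma power_powr_geometric: "(2^j :: real) powr x = (2 powr x) ^ j"
  by (simp add: powr_realpow[symmetric] powr_powr mult.commute)

subsection \<open>Estimates on dyadic shells\<close>

lemma shell_bound_algebra:
  fixes s H N \<alpha> :: real and \<nu> :: nat
  assumes s: "s = (pi/2) / 2^j" and N: "N \<ge> 0" and H: "H \<ge> 0"
  shows "(2 * (s ^ \<nu> * (H * (N * s) powr \<alpha>)))\<^sup>2 / 2^(Suc \<nu>)
     \<le> 4 * N powr (2*\<alpha>) * (pi/2) powr (2*(real \<nu> + \<alpha>)) * H\<^sup>2 * (2^j) powr (-(2*(real \<nu> + \<alpha>)))"
proof -
  have s0: "s > 0" using s by simp
  have e1: "s ^ \<nu> * (H * (N * s) powr \<alpha>) = H * (N powr \<alpha> * s powr (real \<nu> + \<alpha>))"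
    using s0 by (simp add: powr_mult powr_add powr_realpow)
  have "(2 * (s ^ \<nu> * (H * (N * s) powr \<alpha>)))\<^sup>2 = (2 * (H * (N powr \<alpha> * s powr (real \<nu> + \<alpha>))))\<^sup>2"
    by (simp only: e1)
  also have "\<dots> = 4 * H\<^sup>2 * (N powr \<alpha>)\<^sup>2 * (s powr (real \<nu> + \<alpha>))\<^sup>2"
    by (simp only: power_mult_distrib) simp
  also have "(N powr \<alpha>)\<^sup>2 = N powr (2*\<alpha>)" by (simp add: power2_eq_square powr_add[symmetric])
  also have "(s powr (real \<nu> + \<alpha>))\<^sup>2 = s powr (2*(real \<nu> + \<alpha>))"
    by (simp add: power2_eq_square powr_add[symmetric])
  also have "s powr (2*(real \<nu> + \<alpha>)) = (pi/2) powr (2*(real \<nu> + \<alpha>)) * (2^j) powr (-(2*(real \<nu> + \<alpha>)))"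
    unfolding s powr_divide powr_minus_divide[of "2^j"] by simp
  finally have eq: "(2 * (s ^ \<nu> * (H * (N * s) powr \<alpha>)))\<^sup>2 =
      4 * N powr (2*\<alpha>) * (pi/2) powr (2*(real \<nu> + \<alpha>)) * H\<^sup>2 * (2^j) powr (-(2*(real \<nu> + \<alpha>)))"
    by (simp only: mult_ac)
  have "(1::real) \<le> 2^(Suc \<nu>)" by (rule one_le_power) simp
  then have "(2 * (s ^ \<nu> * (H * (N * s) powr \<alpha>)))\<^sup>2 / 2^(Suc \<nu>) \<le> (2 * (s ^ \<nu> * (H * (N * s) powr \<alpha>)))\<^sup>2 / 1"
    by (intro divide_left_mono) auto
  then show ?thesis unfolding eq by simp
qed

lemma sum_fourier_coeff_sq_dyadic_shell:
  fixes f :: "real^'m::finite \<Rightarrow> complex"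
  assumes f: "f \<in> C_nu_alpha \<nu> \<alpha>" and a: "0 \<le> \<alpha>" and K: "finite K" "K \<subseteq> dyadic_shell j"
  shows "(\<Sum>k\<in>K. (cmod (fourier_coeff f k))\<^sup>2)
     \<le> real CARD('m) * (4 * (real (Suc \<nu>)) powr (2*\<alpha>) * (pi/2) powr (2*(real \<nu> + \<alpha>)) *
          (holder_part \<nu> \<alpha> f)\<^sup>2 * (2^j) powr (-(2*(real \<nu> + \<alpha>))))"
proof -
  define H where "H = holder_part \<nu> \<alpha> f"
  define X where "X = 4 * (real (Suc \<nu>)) powr (2*\<alpha>) * (pi/2) powr (2*(real \<nu> + \<alpha>)) * H\<^sup>2 * (2^j) powr (-(2*(real \<nu> + \<alpha>)))"
  define P where "P i = {k::int^'m. 2^j \<le> \<bar>k$i\<bar> \<and> \<bar>k$i\<bar> < 2^(Suc j)}" for i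
  have "(\<Sum>k\<in>K. (cmod (fourier_coeff f k))\<^sup>2) \<le> (\<Sum>i\<in>UNIV. \<Sum>k\<in>K \<inter> P i. (cmod (fourier_coeff f k))\<^sup>2)"
    using K unfolding dyadic_shell_def P_def by (intro sum_le_sum_cover) auto
  also have "\<dots> \<le> (\<Sum>i\<in>(UNIV::'m set). X)"
  proof (rule sum_mono)
    fix i :: 'm
    have "2^(Suc \<nu>) * (\<Sum>k\<in>K \<inter> P i. (cmod (fourier_coeff f k))\<^sup>2)
       \<le> (2 * ((pi / 2^(Suc j)) ^ \<nu> * (H * (real (Suc \<nu>) * (pi / 2^(Suc j))) powr \<alpha>)))\<^sup>2"
      unfolding H_def using K
      by (intro sum_fourier_coeff_sq_coordinate_shell f a C_nu_alpha_holder_part[OF f a])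
        (auto simp: P_def)
    then have "(\<Sum>k\<in>K \<inter> P i. (cmod (fourier_coeff f k))\<^sup>2)
       \<le> (2 * ((pi / 2^(Suc j)) ^ \<nu> * (H * (real (Suc \<nu>) * (pi / 2^(Suc j))) powr \<alpha>)))\<^sup>2 / 2^(Suc \<nu>)"
      by (simp add: field_simps)
    also have "\<dots> \<le> X"
      unfolding X_def by (rule shell_bound_algebra) (use C_nu_alpha_holder_part(2)[OF f a] in \<open>auto simp: H_def\<close>)
    finally show "(\<Sum>k\<in>K \<inter> P i. (cmod (fourier_coeff f k))\<^sup>2) \<le> X" .
  qed
  finally show ?thesis unfolding X_def H_def by simp
qed

lemma powr_le_of_le_power:
  assumes "real n \<le> (c * y) ^ M" "0 < c" "0 < y" "0 \<le> e"
  shows "real n powr e \<le> c powr (real M * e) * y powr (real M * e)"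
proof -
  have "real n powr e \<le> ((c * y) ^ M) powr e" using assms by (intro powr_mono2) auto
  also have "\<dots> = c powr (real M * e) * y powr (real M * e)"
    using assms by (simp add: powr_realpow[symmetric] powr_powr powr_mult)
  finally show ?thesis .
qed

lemma sum_fourier_coeff_powr_dyadic_shell:
  fixes f :: "real^'m::finite \<Rightarrow> complex"
  assumes f: "f \<in> C_nu_alpha \<nu> \<alpha>" and a: "0 \<le> \<alpha>" and K: "finite K" and p: "1 \<le> p" "p \<le> 2"
  shows "(\<Sum>k\<in>K \<inter> dyadic_shell j. cmod (fourier_coeff f k) powr p)
     \<le> 4 powr (real CARD('m) * (1 - p/2)) *
        (real CARD('m) * (4 * (real (Suc \<nu>)) powr (2*\<alpha>) * (pi/2) powr (2*(real \<nu> + \<alpha>)))) powr (p/2) *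
        holder_part \<nu> \<alpha> f powr p * (2^j) powr (real CARD('m) * (1 - p/2) - p * (real \<nu> + \<alpha>))"
proof -
  define A where "A = K \<inter> dyadic_shell j"
  define H where "H = holder_part \<nu> \<alpha> f"
  define K1 where "K1 = 4 * (real (Suc \<nu>)) powr (2*\<alpha>) * (pi/2) powr (2*(real \<nu> + \<alpha>))"
  define y :: real where "y = 2^j"
  define m where "m = real CARD('m)"
  define q where "q = m * (1 - p/2)"
  have H0: "0 \<le> H" unfolding H_def by (rule C_nu_alpha_holder_part(2)[OF f a])
  have fA: "finite A" unfolding A_def using K by simp
  have "real (card A) \<le> (2 * 2^(Suc j)) ^ CARD('m)"
    unfolding A_def using dyadic_shell_subset_cube by (intro real_card_subset_dyadic_cube) blast
  then have c1: "real (card A) powr (1 - p/2) \<le> 4 powr q * y powr q"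
    unfolding q_def m_def y_def using p by (intro powr_le_of_le_power) auto
  have "(\<Sum>k\<in>A. (cmod (fourier_coeff f k))\<^sup>2) \<le> m * (K1 * H\<^sup>2 * y powr (-(2*(real \<nu> + \<alpha>))))"
    unfolding m_def K1_def y_def A_def H_def
    using sum_fourier_coeff_sq_dyadic_shell[OF f a, of A j] fA unfolding A_def by (simp add: mult_ac)
  then have "(\<Sum>k\<in>A. (cmod (fourier_coeff f k))\<^sup>2) powr (p/2) \<le> (m * (K1 * H\<^sup>2 * y powr (-(2*(real \<nu> + \<alpha>))))) powr (p/2)"
    using p by (intro powr_mono2) (auto intro: sum_nonneg)
  also have "\<dots> = (m * K1) powr (p/2) * (H\<^sup>2) powr (p/2) * (y powr (-(2*(real \<nu> + \<alpha>)))) powr (p/2)"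
    by (simp add: powr_mult mult_ac)
  also have "(H\<^sup>2) powr (p/2) = H powr p" by (rule powr_sq[OF H0])
  also have "(y powr (-(2*(real \<nu> + \<alpha>)))) powr (p/2) = y powr (- p * (real \<nu> + \<alpha>))"
    unfolding powr_powr by (rule arg_cong[of _ _ "\<lambda>z. y powr z"]) (simp add: field_simps)
  finally have c2: "(\<Sum>k\<in>A. (cmod (fourier_coeff f k))\<^sup>2) powr (p/2) \<le> (m * K1) powr (p/2) * H powr p * y powr (- p * (real \<nu> + \<alpha>))" .
  have "(\<Sum>k\<in>A. cmod (fourier_coeff f k) powr p) \<le> real (card A) powr (1 - p/2) * (\<Sum>k\<in>A. (cmod (fourier_coeff f k))\<^sup>2) powr (p/2)"
    by (rule sum_powr_le_card_powr_sum_sq[OF fA _ p]) simp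
  also have "\<dots> \<le> (4 powr q * y powr q) * ((m * K1) powr (p/2) * H powr p * y powr (- p * (real \<nu> + \<alpha>)))"
    using c1 c2 by (intro mult_mono) auto
  also have "\<dots> = 4 powr q * (m * K1) powr (p/2) * H powr p * y powr (q - p * (real \<nu> + \<alpha>))"
    by (simp add: powr_add[symmetric] mult_ac)
  finally show ?thesis unfolding A_def q_def m_def K1_def y_def H_def .
qed

lemma sum_fourier_coeff_powr_dyadic_cube:
  fixes f :: "real^'m::finite \<Rightarrow> complex"
  assumes cf: "continuous_on UNIV f" and K: "finite K" and p: "1 \<le> p" "p \<le> 2"
  shows "(\<Sum>k\<in>K \<inter> dyadic_cube J. cmod (fourier_coeff f k) powr p)
     \<le> 2 powr (real CARD('m) * (1 - p/2)) * (2^J) powr (real CARD('m) * (1 - p/2)) * L2_torus_norm f powr p"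
proof -
  define A where "A = K \<inter> dyadic_cube J"
  have fA: "finite A" unfolding A_def using K by simp
  have "real (card A) \<le> (2 * 2^J) ^ CARD('m)"
    unfolding A_def by (intro real_card_subset_dyadic_cube) blast
  then have c1: "real (card A) powr (1 - p/2) \<le> 2 powr (real CARD('m) * (1 - p/2)) * (2^J) powr (real CARD('m) * (1 - p/2))"
    using p by (intro powr_le_of_le_power) auto
  have "(\<Sum>k\<in>A. (cmod (fourier_coeff f k))\<^sup>2) powr (p/2) \<le> ((L2_torus_norm f)\<^sup>2) powr (p/2)"
    using sum_fourier_coeff_sq_le_L2[OF cf fA] p by (intro powr_mono2) (auto intro: sum_nonneg)
  then have c2: "(\<Sum>k\<in>A. (cmod (fourier_coeff f k))\<^sup>2) powr (p/2) \<le> L2_torus_norm f powr p"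
    using powr_sq[OF L2_torus_norm_nonneg[OF cf]] by simp
  have "(\<Sum>k\<in>A. cmod (fourier_coeff f k) powr p) \<le> real (card A) powr (1 - p/2) * (\<Sum>k\<in>A. (cmod (fourier_coeff f k))\<^sup>2) powr (p/2)"
    by (rule sum_powr_le_card_powr_sum_sq[OF fA _ p]) simp
  also have "\<dots> \<le> 2 powr (real CARD('m) * (1 - p/2)) * (2^J) powr (real CARD('m) * (1 - p/2)) * L2_torus_norm f powr p"
    using c1 c2 by (intro mult_mono) auto
  finally show ?thesis unfolding A_def .
qed

lemma sum_fourier_coeff_powr_le:
  fixes f :: "real^'m::finite \<Rightarrow> complex"
  assumes f: "f \<in> C_nu_alpha \<nu> \<alpha>" and a: "0 \<le> \<alpha>" and K: "finite K" and p: "1 \<le> p" "p \<le> 2"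
  defines "r \<equiv> 2 powr (real CARD('m) * (1 - p/2) - p * (real \<nu> + \<alpha>))"
    and "C \<equiv> 4 powr (real CARD('m) * (1 - p/2)) *
        (real CARD('m) * (4 * (real (Suc \<nu>)) powr (2*\<alpha>) * (pi/2) powr (2*(real \<nu> + \<alpha>)))) powr (p/2)"
  assumes r: "r < 1"
  shows "(\<Sum>k\<in>K. cmod (fourier_coeff f k) powr p)
     \<le> 2 powr (real CARD('m) * (1 - p/2)) * (2^J) powr (real CARD('m) * (1 - p/2)) * L2_torus_norm f powr p
       + C * holder_part \<nu> \<alpha> f powr p * (r ^ J / (1 - r))"
proof -
  define c where "c k = cmod (fourier_coeff f k) powr p" for k
  define H where "H = holder_part \<nu> \<alpha> f"
  have c0: "0 \<le> c k" for k unfolding c_def by simp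
  obtain N where N: "K \<subseteq> dyadic_cube N" "J < N" using finite_subset_dyadic_cube[OF K] by blast
  have "(\<Sum>k\<in>K. c k) = (\<Sum>k\<in>K \<inter> dyadic_cube J. c k) + (\<Sum>k\<in>K - dyadic_cube J. c k)"
    using K by (rule sum.Int_Diff)
  also have "(\<Sum>k\<in>K \<inter> dyadic_cube J. c k)
      \<le> 2 powr (real CARD('m) * (1 - p/2)) * (2^J) powr (real CARD('m) * (1 - p/2)) * L2_torus_norm f powr p"
    unfolding c_def by (rule sum_fourier_coeff_powr_dyadic_cube[OF C_nu_alpha_continuous[OF f] K p])
  also have "(\<Sum>k\<in>K - dyadic_cube J. c k) \<le> (\<Sum>j\<in>{J..<N}. \<Sum>k\<in>(K - dyadic_cube J) \<inter> dyadic_shell j. c k)"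
    using K c0 N(1) dyadic_shells_cover by (intro sum_le_sum_cover) blast+
  also have "\<dots> \<le> (\<Sum>j\<in>{J..<N}. C * H powr p * r ^ j)"
  proof (rule sum_mono)
    fix j
    have "(\<Sum>k\<in>(K - dyadic_cube J) \<inter> dyadic_shell j. c k) \<le> (\<Sum>k\<in>K \<inter> dyadic_shell j. c k)"
      using K c0 by (intro sum_mono2) auto
    also have "\<dots> \<le> C * H powr p * (2^j) powr (real CARD('m) * (1 - p/2) - p * (real \<nu> + \<alpha>))"
      unfolding c_def C_def H_def by (rule sum_fourier_coeff_powr_dyadic_shell[OF f a K p])
    also have "(2^j :: real) powr (real CARD('m) * (1 - p/2) - p * (real \<nu> + \<alpha>)) = r ^ j"
      unfolding r_def by (rule power_powr_geometric)
    finally show "(\<Sum>k\<in>(K - dyadic_cube J) \<inter> dyadic_shell j. c k) \<le> C * H powr p * r ^ j" .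
  qed
  also have "\<dots> = C * H powr p * (\<Sum>j\<in>{J..<N}. r ^ j)" by (simp add: sum_distrib_left)
  also have "\<dots> \<le> C * H powr p * (r ^ J / (1 - r))"
    using sum_power_le_geometric_tail[of r J N] r by (intro mult_left_mono) (auto simp: r_def C_def)
  finally show ?thesis unfolding c_def H_def by simp
qed

subsection \<open>Balancing the two parts\<close>

lemma exists_dyadic_bracket:
  fixes R :: real assumes "1 \<le> R"
  shows "\<exists>J::nat. 2^J \<le> R \<and> R < 2 * 2^J"
proof -
  obtain n where n: "R < 2^n" using real_arch_pow[of 2 R] by auto
  have "(2::real)^n \<le> 2^(Suc n)" by simp
  then have ex: "R < 2^(Suc n)" using n by linarith
  define J where "J = (LEAST j. R < 2^(Suc j))"
  have "R < 2^(Suc J)" unfolding J_def by (rule LeastI[where P="\<lambda>j. R < 2^(Suc j)", OF ex])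
  moreover have "2^J \<le> R"
  proof (cases J)
    case (Suc j)
    have "\<not> R < 2^(Suc j)" unfolding J_def using Suc by (metis J_def lessI not_less_Least)
    then show ?thesis using Suc by simp
  qed (use assms in simp)
  ultimately show ?thesis by auto
qed

text \<open>The choice \<open>2^J \<approx> (B/F)^(1/a)\<close> makes both terms of the previous estimate
  comparable to \<open>B^(q/a) F^(p - q/a)\<close>.\<close>

lemma dyadic_balance:
  fixes B F H a q p e r C :: real
  assumes F: "F > 0" and BF: "F \<le> B" and H: "0 \<le> H" "H \<le> B" and a: "a > 0" and q: "q \<ge> 0" and p: "p > 0"
    and e: "e = p * a - q" "e > 0" and r: "r = 2 powr (-e)" and C: "C \<ge> 0"
  shows "\<exists>J. 2 powr q * (2^J) powr q * F powr p + C * H powr p * (r ^ J / (1 - r))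
     \<le> (2 powr q + C * 2 powr e / (1 - r)) * (B powr (q/a) * F powr (p - q/a))"
proof -
  define X where "X = B / F"
  have X1: "1 \<le> X" using F BF unfolding X_def by simp
  have B: "B = X * F" unfolding X_def using F by simp
  have r1: "r < 1" "0 < r" unfolding r using e by (auto intro: powr_less_one)
  have "1 \<le> X powr (1/a)" using X1 a by (intro ge_one_powr_ge_zero) auto
  from exists_dyadic_bracket[OF this]
  obtain J :: nat where J: "2^J \<le> X powr (1/a)" "X powr (1/a) < 2 * 2^J"
    by (elim exE conjE) (rule that)
  have low: "(2^J) powr q \<le> X powr (q/a)"
  proof -
    have "(2^J) powr q \<le> (X powr (1/a)) powr q" using J q by (intro powr_mono2) auto
    then show ?thesis by (simp add: powr_powr)
  qed
  have high: "r ^ J \<le> 2 powr e * X powr (-(e/a))"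
  proof -
    have "r ^ J = (2^J) powr (-e)" unfolding r power_powr_geometric ..
    also have "\<dots> \<le> (X powr (1/a) / 2) powr (-e)" using J e X1 by (intro powr_mono2') auto
    also have "\<dots> = 2 powr e * X powr (-(e/a))"
      by (simp add: powr_divide powr_powr powr_minus_divide)
    finally show ?thesis .
  qed
  have exps: "X powr p * X powr (-(e/a)) = X powr (q/a)"
    using a X1 by (simp add: powr_add[symmetric] e field_simps)
  define Z where "Z = B powr (q/a) * F powr (p - q/a)"
  have XZ: "X powr (q/a) * F powr p = Z"
    unfolding Z_def X_def using F BF by (simp add: powr_divide powr_diff)
  have "(2^J) powr q * F powr p \<le> X powr (q/a) * F powr p" using low by (rule mult_right_mono) simp
  then have t1: "2 powr q * (2^J) powr q * F powr p \<le> 2 powr q * Z"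
    unfolding XZ by (simp add: mult.assoc)
  have "C * H powr p * (r ^ J / (1 - r))
      \<le> C * (X powr p * F powr p) * (2 powr e * X powr (-(e/a)) / (1 - r))"
    using high r1 H p C B X1 F
    by (intro mult_mono divide_right_mono) (auto simp: powr_mult[symmetric] intro: powr_mono2)
  also have "\<dots> = C * 2 powr e / (1 - r) * (X powr p * X powr (-(e/a)) * F powr p)"
    using r1 by (simp add: field_simps)
  finally have t2: "C * H powr p * (r ^ J / (1 - r)) \<le> C * 2 powr e / (1 - r) * Z"
    unfolding exps XZ .
  have "2 powr q * (2^J) powr q * F powr p + C * H powr p * (r ^ J / (1 - r))
      \<le> 2 powr q * Z + C * 2 powr e / (1 - r) * Z"
    by (rule add_mono[OF t1 t2])
  then show ?thesis unfolding Z_def by (intro exI[of _ J]) (simp add: distrib_right)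
qed

lemma uniform_sum_fourier_coeff_powr_bound:
  fixes p \<alpha> :: real and \<nu> :: nat
  assumes p: "1 \<le> p" "p < 2" and a0: "0 \<le> \<alpha>"
    and crit: "real \<nu> + \<alpha> > real CARD('m::finite) * (1/p - 1/2)"
  defines "\<tau> \<equiv> real CARD('m) * (1/p - 1/2) / (real \<nu> + \<alpha>)"
  shows "\<exists>C>0. \<forall>f \<in> (C_nu_alpha \<nu> \<alpha> :: (real^'m \<Rightarrow> complex) set). \<forall>K. finite K \<longrightarrow>
    (\<Sum>k\<in>K. cmod (fourier_coeff f k) powr p)
      \<le> C * C_nu_alpha_norm \<nu> \<alpha> f powr (p * \<tau>) * L2_torus_norm f powr (p * (1 - \<tau>))"
proof -
  define m where "m = real CARD('m)"
  define a where "a = real \<nu> + \<alpha>"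
  define q where "q = m * (1 - p/2)"
  define e where "e = p * a - q"
  define r where "r = (2::real) powr (q - p * a)"
  define C2 where "C2 = 4 powr (m * (1 - p/2)) *
        (m * (4 * (real (Suc \<nu>)) powr (2*\<alpha>) * (pi/2) powr (2*(real \<nu> + \<alpha>)))) powr (p/2)"
  define C where "C = 2 powr q + C2 * 2 powr e / (1 - r)"
  have m0: "m > 0" unfolding m_def by simp
  have q: "q = p * (m * (1/p - 1/2))" "q \<ge> 0" unfolding q_def using p m0 by (auto simp: field_simps)
  have "0 \<le> m * (1/p - 1/2)" using p m0 by (simp add: field_simps)
  then have a: "a > 0" using crit unfolding a_def m_def by linarith
  have "p * (m * (1/p - 1/2)) < p * a" using crit p unfolding a_def m_def by (intro mult_strict_left_mono) auto
  then have e0: "e > 0" unfolding e_def q(1) by simp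
  have r: "r = 2 powr (-e)" unfolding r_def e_def by simp
  have r1: "r < 1" unfolding r using e0 by (intro powr_less_one) auto
  have C20: "C2 \<ge> 0" unfolding C2_def by simp
  have C: "C > 0" unfolding C_def using C20 r1 by (intro add_pos_nonneg) auto
  have exps: "q / a = p * \<tau>" "p * (1 - \<tau>) = p - q / a"
    unfolding \<tau>_def q(1) a_def[symmetric] m_def[symmetric] using a by (auto simp: field_simps)
  show ?thesis
  proof (intro exI[of _ C] conjI ballI allI impI C)
    fix f :: "real^'m \<Rightarrow> complex" and K :: "(int^'m) set"
    assume f: "f \<in> C_nu_alpha \<nu> \<alpha>" and K: "finite K"
    define B where "B = C_nu_alpha_norm \<nu> \<alpha> f"
    define F where "F = L2_torus_norm f"
    note norm_ge = C_nu_alpha_norm_ge[OF f a0, folded B_def F_def]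
    show "(\<Sum>k\<in>K. cmod (fourier_coeff f k) powr p) \<le> C * B powr (p * \<tau>) * F powr (p * (1 - \<tau>))"
    proof (cases "F = 0")
      case True
      then show ?thesis
        using fourier_coeff_eq_0_if_L2_torus_norm_eq_0[OF C_nu_alpha_continuous[OF f]] by (simp add: F_def)
    next
      case False
      then have F: "F > 0" using L2_torus_norm_nonneg[OF C_nu_alpha_continuous[OF f]] by (simp add: F_def)
      obtain J where J: "2 powr q * (2^J) powr q * F powr p + C2 * holder_part \<nu> \<alpha> f powr p * (r ^ J / (1 - r))
          \<le> C * (B powr (q/a) * F powr (p - q/a))"
        using dyadic_balance[OF F norm_ge(2) C_nu_alpha_holder_part(2)[OF f a0] norm_ge(1) a q(2) _ e_def e0 r C20]
          p unfolding C_def by auto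
      have "(\<Sum>k\<in>K. cmod (fourier_coeff f k) powr p)
          \<le> 2 powr q * (2^J) powr q * F powr p + C2 * holder_part \<nu> \<alpha> f powr p * (r ^ J / (1 - r))"
        using sum_fourier_coeff_powr_le[OF f a0 K, of p J] p r1
        unfolding F_def C2_def q_def r_def a_def m_def by simp
      with J show ?thesis unfolding exps(2) exps(1) by (simp add: mult.assoc)
    qed
  qed
qed

lemma Ap_norm_le_of_finite_sums:
  fixes f :: "real^'m::finite \<Rightarrow> complex"
  assumes p: "p > 0" and bound: "\<And>K. finite K \<Longrightarrow> (\<Sum>k\<in>K. cmod (fourier_coeff f k) powr p) \<le> M"
  shows "(\<lambda>k. norm (fourier_coeff f k) powr p) summable_on UNIV \<and> Ap_norm p f \<le> M powr (1/p)"
proof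
  show sm: "(\<lambda>k. norm (fourier_coeff f k) powr p) summable_on UNIV"
    using bound by (intro nonneg_bdd_above_summable_on bdd_aboveI2[of _ _ M]) auto
  have "(\<Sum>\<^sub>\<infinity>k\<in>UNIV. norm (fourier_coeff f k) powr p) \<le> M"
    using bound by (intro infsum_le_finite_sums[OF sm]) auto
  moreover have "0 \<le> (\<Sum>\<^sub>\<infinity>k\<in>UNIV. norm (fourier_coeff f k) powr p)" by (intro infsum_nonneg) simp
  ultimately show "Ap_norm p f \<le> M powr (1/p)"
    unfolding Ap_norm_def using p by (intro powr_mono2) auto
qed

theorem lemma2:
  fixes p \<alpha> :: real and \<nu> :: nat
  assumes "1 \<le> p" "p < 2" "0 \<le> \<alpha>" "\<alpha> \<le> 1"
    and "real \<nu> + \<alpha> > real CARD('m::finite) * (1/p - 1/2)"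
  shows "\<exists>c>0. \<forall>f \<in> (C_nu_alpha \<nu> \<alpha> :: (real^'m \<Rightarrow> complex) set).
           (\<lambda>k. norm (fourier_coeff f k) powr p) summable_on UNIV \<and>
           Ap_norm p f \<le> c * C_nu_alpha_norm \<nu> \<alpha> f powr
                 (real CARD('m) * (1/p - 1/2) / (real \<nu> + \<alpha>))
             * L2_torus_norm f powr
                 (1 - real CARD('m) * (1/p - 1/2) / (real \<nu> + \<alpha>))"
proof -
  define \<tau> where "\<tau> = real CARD('m) * (1/p - 1/2) / (real \<nu> + \<alpha>)"
  obtain C where C: "C > 0" and bound: "\<forall>f \<in> (C_nu_alpha \<nu> \<alpha> :: (real^'m \<Rightarrow> complex) set). \<forall>K. finite K \<longrightarrow>
      (\<Sum>k\<in>K. cmod (fourier_coeff f k) powr p)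
        \<le> C * C_nu_alpha_norm \<nu> \<alpha> f powr (p * \<tau>) * L2_torus_norm f powr (p * (1 - \<tau>))"
    using uniform_sum_fourier_coeff_powr_bound[OF assms(1-3,5), folded \<tau>_def] by auto
  show ?thesis unfolding \<tau>_def[symmetric]
  proof (intro exI[of _ "C powr (1/p)"] conjI ballI)
    show "C powr (1/p) > 0" using C by simp
    fix f :: "real^'m \<Rightarrow> complex" assume f: "f \<in> C_nu_alpha \<nu> \<alpha>"
    have p: "p > 0" using assms(1) by simp
    note Ap = Ap_norm_le_of_finite_sums[OF p bound[rule_format, OF f]]
    then show "(\<lambda>k. norm (fourier_coeff f k) powr p) summable_on UNIV" by blast
    have "(C * C_nu_alpha_norm \<nu> \<alpha> f powr (p * \<tau>) * L2_torus_norm f powr (p * (1 - \<tau>))) powr (1/p)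
        = C powr (1/p) * C_nu_alpha_norm \<nu> \<alpha> f powr \<tau> * L2_torus_norm f powr (1 - \<tau>)"
      using C p by (simp add: powr_mult powr_powr)
    then show "Ap_norm p f \<le> C powr (1/p) * C_nu_alpha_norm \<nu> \<alpha> f powr \<tau> * L2_torus_norm f powr (1 - \<tau>)"
      using Ap by simp
  qed
qed
end
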